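(* Let $\phi\in\mathcal{BF}$ with $a=b=0$ in its representation, and set $\beta:=-\omega_0^{\phi'}\ge0$. If for every $a>-\beta$ the function $h_a(\lambda):=\phi_e(\lambda+a)-\phi_e(a)$, $\lambda>0$, belongs to $\mathcal{CBF}$, then the L\'evy measure of $\phi$ has a density $\mu(t)$ such that $t\mapsto e^{\beta t}\mu(t)$ is completely monotone on $(0,\infty)$.
   Context: A function $f:(0,\infty)\to\mathbb{R}$ is completely monotone ($f\in\mathcal{CM}$) if it is $C^\infty$ and $(-1)^n f^{(n)}\ge0$ for all $n\ge0$. A function $\phi:(0,\infty)\to[0,\infty)$ is a Bernstein function, $\phi\in\mathcal{BF}$, if it is $C^\infty$ and $(-1)^{n-1}\phi^{(n)}(\lambda)\ge0$ for all $n\in\mathbb{N}$, $\lambda>0$; it has a unique representation $\phi(\lambda)=a+b\lambda+\int_{(0,\infty)}(1-e^{-\lambda t})\mu(dt)$ with $a,b\ge0$ and a measure $\mu$ on $(0,\infty)$ with $\int(1\wedge t)\mu(dt)<\infty$ (the L\'evy measure). $\mathcal{CBF}$ (complete Bernstein functions) is the set of $\phi\in\mathcal{BF}$ whose L\'evy measure has a completely monotone density. For completely monotone $f$, with $f^{(n)}(0+):=\lim_{\lambda\to0+}f^{(n)}(\lambda)\in[-\infty,\infty]$: if all are finite, $\omega_0^f:=\inf\{\lambda:\sum_{n\ge0}\frac{f^{(n)}(0+)}{n!}\lambda^n\text{ converges}\}$, otherwise $\omega_0^f:=0$. With $\beta:=-\omega_0^{\phi'}$, the extension $\phi_e:(-\beta,\infty)\to\mathbb{R}$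 equals $\phi$ on $(0,\infty)$ and, if $\beta>0$, $\phi_e(\lambda)=\sum_{n\ge0}\frac{\phi^{(n)}(0+)}{n!}\lambda^n$ on $(-\beta,0]$. *)

theory Defs
  imports "HOL-Analysis.Analysis"
begin

definition smooth_pos :: "(real \<Rightarrow> real) \<Rightarrow> bool" where
  "smooth_pos f \<longleftrightarrow> (\<forall>n. \<forall>x>0. (deriv ^^ n) f differentiable (at x))"

definition completely_monotone :: "(real \<Rightarrow> real) \<Rightarrow> bool" where
  "completely_monotone f \<longleftrightarrow> smooth_pos f \<and>
     (\<forall>n. \<forall>x>0. (-1) ^ n * (deriv ^^ n) f x \<ge> 0)"

definition bernstein :: "(real \<Rightarrow> real) \<Rightarrow> bool" where
  "bernstein f \<longleftrightarrow> smooth_pos f \<and> (\<forall>x>0. f x \<ge> 0) \<and>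
     (\<forall>n\<ge>1. \<forall>x>0. (-1) ^ (n - 1) * (deriv ^^ n) f x \<ge> 0)"

text \<open>Levy--Khintchine triple: phi(l) = a + b l + int (1 - exp(-l t)) mu(dt),
  with mu a measure on (0,oo) (a Borel measure on the reals giving no mass
  to (-oo,0]) and int (1 min t) mu(dt) < oo.\<close>
definition levy_triple :: "(real \<Rightarrow> real) \<Rightarrow> real \<Rightarrow> real \<Rightarrow> real measure \<Rightarrow> bool" where
  "levy_triple f a b \<mu> \<longleftrightarrow> a \<ge> 0 \<and> b \<ge> 0 \<and> sets \<mu> = sets borel \<and>
     emeasure \<mu> {..0} = 0 \<and>
     (\<integral>\<^sup>+ t. ennreal (min 1 t) \<partial>\<mu>) < \<infinity> \<and>
     (\<forall>l>0. f l = a + b * l + (\<integral> t. (1 - exp (- l * t)) \<partial>\<mu>))"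

definition has_density_on_pos :: "real measure \<Rightarrow> (real \<Rightarrow> real) \<Rightarrow> bool" where
  "has_density_on_pos \<mu> g \<longleftrightarrow> g \<in> borel_measurable borel \<and> (\<forall>t>0. g t \<ge> 0) \<and>
     \<mu> = density lborel (\<lambda>t. ennreal (indicator {0<..} t * g t))"

definition complete_bernstein :: "(real \<Rightarrow> real) \<Rightarrow> bool" where
  "complete_bernstein f \<longleftrightarrow> bernstein f \<and>
     (\<exists>a b \<mu> m. levy_triple f a b \<mu> \<and> has_density_on_pos \<mu> m \<and> completely_monotone m)"

definition deriv_at_0plus :: "(real \<Rightarrow> real) \<Rightarrow> nat \<Rightarrow> ereal" where
  "deriv_at_0plus f n = Lim (at_right 0) (\<lambda>x. ereal ((deriv ^^ n) f x))"

definition omega0 :: "(real \<Rightarrow> real) \<Rightarrow> ereal" where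
  "omega0 f = (if (\<forall>n. \<bar>deriv_at_0plus f n\<bar> \<noteq> \<infinity>)
     then Inf {ereal l | l. summable (\<lambda>n. real_of_ereal (deriv_at_0plus f n) / fact n * l ^ n)}
     else 0)"

text \<open>The extension phi_e: phi on (0,oo), the Taylor series at 0+ on (-beta,0]
  (only used on (-beta,oo), and on (-beta,0] only when beta > 0).\<close>
definition phi_ext :: "(real \<Rightarrow> real) \<Rightarrow> real \<Rightarrow> real" where
  "phi_ext f l = (if 0 < l then f l
     else (\<Sum>n. real_of_ereal (deriv_at_0plus f n) / fact n * l ^ n))"

end

theory Submission
  imports Defs "HOL-Probability.Distribution_Functions"
begin

text \<open>
  For \<open>a > -\<beta>\<close> the shifted function \<open>h\<^sub>a(\<lambda>) = \<phi>\<^sub>e(\<lambda> + a) - \<phi>\<^sub>e(a)\<close> has the L\'evy--Khintchine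
  representation \<open>\<integral> (1 - e\<^sup>-\<^sup>\<lambda>\<^sup>t) e\<^sup>-\<^sup>a\<^sup>t \<mu>(dt)\<close>: for \<open>a \<le> 0\<close> this follows by expanding
  \<open>e\<^sup>-\<^sup>a\<^sup>t - 1\<close> into its power series, whose coefficients are, up to sign, the moments
  \<open>\<integral> t\<^sup>n \<mu>(dt) = \<bar>\<phi>\<^sup>(\<^sup>n\<^sup>)(0+)\<bar>\<close>, summable because \<open>a > \<omega>\<^sub>0\<^sup>\<phi>\<^sup>'\<close>.
  As L\'evy measures are determined by their Bernstein functions, the L\'evy measure
  \<open>e\<^sup>-\<^sup>a\<^sup>t \<mu>(dt)\<close> of the complete Bernstein function \<open>h\<^sub>a\<close> has a completely monotone density,
  i.e. \<open>\<mu>(dt) = g(t) dt\<close> with \<open>e\<^sup>-\<^sup>a\<^sup>t g(t)\<close> completely monotone for every \<open>a > -\<beta>\<close>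
  (all these densities agree, being continuous).  Letting \<open>a \<down> -\<beta>\<close> in the Leibniz
  formula for the derivatives of \<open>e\<^sup>-\<^sup>a\<^sup>t g(t)\<close> gives complete monotonicity of \<open>e\<^sup>\<beta>\<^sup>t g(t)\<close>.
\<close>

section \<open>Higher derivatives on the positive half-line\<close>

lemma higher_deriv_cong_pos:
  fixes f g :: "real \<Rightarrow> real"
  assumes "\<And>x. x > 0 \<Longrightarrow> f x = g x" and "y > 0"
  shows "(deriv ^^ n) f y = (deriv ^^ n) g y"
  using assms(2)
proof (induction n arbitrary: y)
  case 0
  then show ?case using assms(1) by simp
next
  case (Suc n)
  have "eventually (\<lambda>z. (deriv ^^ n) f z = (deriv ^^ n) g z) (nhds y)"
    using eventually_nhds_in_open[of "{0<..}" y] Suc by (auto elim!: eventually_mono)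
  then show ?case by (simp add: deriv_cong_ev)
qed

lemma differentiable_cong_pos:
  fixes f g :: "real \<Rightarrow> real"
  assumes "\<And>x. x > 0 \<Longrightarrow> f x = g x" "y > 0" "f differentiable (at y)"
  shows "g differentiable (at y)"
proof -
  from assms(3) obtain D where "(f has_field_derivative D) (at y)"
    using real_differentiable_def by blast
  then have "(g has_field_derivative D) (at y)"
    by (rule has_field_derivative_transform_within_open[of _ _ _ "{0<..}"]) (use assms in auto)
  then show ?thesis using real_differentiable_def by blast
qed

lemma smooth_pos_cong:
  assumes "\<And>x. x > 0 \<Longrightarrow> f x = g x" "smooth_pos f"
  shows "smooth_pos g"
  unfolding smooth_pos_def
proof (intro allI impI)
  fix n and y :: real
  assume "y > 0"
  moreover have "(deriv ^^ n) f differentiable (at y)"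
    using assms(2) \<open>y > 0\<close> by (auto simp: smooth_pos_def)
  ultimately show "(deriv ^^ n) g differentiable (at y)"
    by (rule differentiable_cong_pos[rotated]) (use higher_deriv_cong_pos[of f g, OF assms(1)] in auto)
qed

lemma completely_monotone_cong:
  assumes "\<And>x. x > 0 \<Longrightarrow> f x = g x" "completely_monotone f"
  shows "completely_monotone g"
  unfolding completely_monotone_def
proof (intro conjI allI impI)
  show "smooth_pos g"
    using smooth_pos_cong[OF assms(1)] assms(2) by (auto simp: completely_monotone_def)
  fix n and y :: real
  assume "y > 0"
  then show "0 \<le> (-1) ^ n * (deriv ^^ n) g y"
    using assms(2) higher_deriv_cong_pos[of f g, OF assms(1) \<open>y > 0\<close>, symmetric]
    unfolding completely_monotone_def by simp
qed

lemma completely_monotone_imp_continuous_on: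
  assumes "completely_monotone m"
  shows "continuous_on {0<..} m"
proof (intro continuous_at_imp_continuous_on ballI)
  fix x :: real
  assume "x \<in> {0<..}"
  then have "(deriv ^^ 0) m differentiable at x"
    using assms unfolding completely_monotone_def smooth_pos_def by blast
  then show "isCont m x" by (simp add: differentiable_imp_continuous_within)
qed

lemma binomial_sum_Suc:
  fixes c :: real and D :: "nat \<Rightarrow> real"
  shows "c * (\<Sum>k\<le>n. real (n choose k) * c^(n-k) * D k) + (\<Sum>k\<le>n. real (n choose k) * c^(n-k) * D (Suc k))
       = (\<Sum>k\<le>Suc n. real (Suc n choose k) * c^(Suc n-k) * D k)"
proof -
  have left: "c * (\<Sum>k\<le>n. real (n choose k) * c^(n-k) * D k)
      = (\<Sum>k\<le>Suc n. real (n choose k) * c^(Suc n-k) * D k)"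
    by (simp add: sum_distrib_left Suc_diff_le mult_ac)
  have right: "(\<Sum>k\<le>n. real (n choose k) * c^(n-k) * D (Suc k))
      = (\<Sum>k\<le>Suc n. real (n choose (k - 1)) * c^(Suc n-k) * (if k = 0 then 0 else D k))"
    by (subst sum.atMost_Suc_shift) simp
  have "real (Suc n choose k) * c^(Suc n-k) * D k
      = real (n choose k) * c^(Suc n-k) * D k + real (n choose (k - 1)) * c^(Suc n-k) * (if k = 0 then 0 else D k)"
    for k by (cases k) (simp_all add: algebra_simps)
  then show ?thesis unfolding left right sum.distrib[symmetric] by simp
qed

lemma DERIV_exp_mult_const: "((\<lambda>y. exp (c*y)) has_field_derivative c * exp (c*x)) (at x)"
  by (auto intro!: derivative_eq_intros)

lemma exp_mult_binomial_sum_has_derivative: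
  fixes f :: "real \<Rightarrow> real" and c :: real
  assumes "smooth_pos f" and "x > 0"
  shows "((\<lambda>y. exp (c*y) * (\<Sum>k\<le>n. real (n choose k) * c^(n-k) * (deriv^^k) f y)) has_field_derivative
        exp (c*x) * (\<Sum>k\<le>Suc n. real (Suc n choose k) * c^(Suc n-k) * (deriv^^k) f x)) (at x)"
proof -
  define S where "S = (\<lambda>n y. \<Sum>k\<le>n. real (n choose k) * c^(n-k) * (deriv^^k) f y)"
  have "((deriv^^k) f has_field_derivative (deriv^^Suc k) f x) (at x)" for k
    using assms unfolding smooth_pos_def by (simp add: DERIV_deriv_iff_real_differentiable)
  then have "(S n has_field_derivative
      (\<Sum>k\<le>n. real (n choose k) * c^(n-k) * (deriv^^Suc k) f x)) (at x)"
    unfolding S_def by (intro DERIV_sum DERIV_cmult)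
  from DERIV_mult[OF DERIV_exp_mult_const[of c x] this]
  have "((\<lambda>y. exp (c*y) * S n y) has_field_derivative
      c * exp (c*x) * S n x + (\<Sum>k\<le>n. real (n choose k) * c^(n-k) * (deriv^^Suc k) f x) * exp (c*x)) (at x)" .
  also have "c * exp (c*x) * S n x + (\<Sum>k\<le>n. real (n choose k) * c^(n-k) * (deriv^^Suc k) f x) * exp (c*x)
      = exp (c*x) * (c * S n x + (\<Sum>k\<le>n. real (n choose k) * c^(n-k) * (deriv^^Suc k) f x))"
    by (simp only: algebra_simps)
  also have "\<dots> = exp (c*x) * S (Suc n) x"
    unfolding S_def binomial_sum_Suc[of c n "\<lambda>k. (deriv^^k) f x"] ..
  finally show ?thesis unfolding S_def .
qed

lemma higher_deriv_exp_mult: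
  fixes f :: "real \<Rightarrow> real" and c :: real
  assumes "smooth_pos f" and "x > 0"
  shows "(deriv ^^ n) (\<lambda>t. exp (c*t) * f t) x
     = exp (c*x) * (\<Sum>k\<le>n. real (n choose k) * c^(n-k) * (deriv^^k) f x)"
  using assms(2)
proof (induction n arbitrary: x)
  case 0
  then show ?case by simp
next
  case (Suc n)
  have "eventually (\<lambda>y. (deriv ^^ n) (\<lambda>t. exp (c*t) * f t) y
      = exp (c*y) * (\<Sum>k\<le>n. real (n choose k) * c^(n-k) * (deriv^^k) f y)) (nhds x)"
    using eventually_nhds_in_open[of "{0<..}" x] Suc by (auto elim!: eventually_mono)
  then have "(deriv ^^ Suc n) (\<lambda>t. exp (c*t) * f t) x
      = deriv (\<lambda>y. exp (c*y) * (\<Sum>k\<le>n. real (n choose k) * c^(n-k) * (deriv^^k) f y)) x"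
    by (simp add: deriv_cong_ev)
  also have "\<dots> = exp (c*x) * (\<Sum>k\<le>Suc n. real (Suc n choose k) * c^(Suc n-k) * (deriv^^k) f x)"
    by (rule DERIV_imp_deriv, rule exp_mult_binomial_sum_has_derivative) (use assms(1) Suc.prems in auto)
  finally show ?case .
qed

lemma smooth_pos_exp_mult:
  assumes "smooth_pos f"
  shows "smooth_pos (\<lambda>t. exp (c*t) * f t)"
  unfolding smooth_pos_def
proof (intro allI impI)
  fix n and x :: real
  assume "x > 0"
  have "(\<lambda>y. exp (c*y) * (\<Sum>k\<le>n. real (n choose k) * c^(n-k) * (deriv^^k) f y)) differentiable (at x)"
    using exp_mult_binomial_sum_has_derivative[OF assms \<open>x > 0\<close>] real_differentiable_def by blast
  then show "(deriv ^^ n) (\<lambda>t. exp (c * t) * f t) differentiable at x"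
    by (rule differentiable_cong_pos[rotated 2]) (use higher_deriv_exp_mult[OF assms] \<open>x > 0\<close> in auto)
qed

text \<open>Letting the exponent tend to \<open>0\<close> in the Leibniz formula.\<close>

lemma completely_monotone_of_exp_mult:
  assumes cm: "\<And>e. e > 0 \<Longrightarrow> completely_monotone (\<lambda>t. exp (- e * t) * G t)"
  shows "completely_monotone G"
  unfolding completely_monotone_def
proof (intro conjI allI impI)
  have "smooth_pos (\<lambda>t. exp (- 1 * t) * G t)"
    using cm[of 1] by (simp add: completely_monotone_def)
  from smooth_pos_exp_mult[OF this, of 1] show sm: "smooth_pos G"
    by (rule smooth_pos_cong[rotated]) (simp add: exp_minus field_simps)
  fix n and x :: real
  assume "x > 0"
  define F where "F e = (-1)^n * (exp (- e * x) * (\<Sum>k\<le>n. real (n choose k) * (- e)^(n-k) * (deriv^^k) G x))"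
    for e :: real
  have "eventually (\<lambda>e. 0 \<le> F e) (at_right 0)"
    using eventually_at_right_less[of 0]
  proof eventually_elim
    case (elim e)
    have "0 \<le> (-1)^n * (deriv ^^ n) (\<lambda>t. exp (- e * t) * G t) x"
      using cm[OF elim] \<open>x > 0\<close> unfolding completely_monotone_def by blast
    then show "0 \<le> F e" by (simp only: F_def higher_deriv_exp_mult[OF sm \<open>x > 0\<close>])
  qed
  moreover have "(F \<longlongrightarrow> F 0) (at_right 0)"
    unfolding F_def by (intro tendsto_intros)
  ultimately have "0 \<le> F 0"
    by (intro tendsto_lowerbound[of F "F 0" "at_right 0" 0]) auto
  moreover have "(\<Sum>k\<le>n. real (n choose k) * (- 0)^(n-k) * (deriv^^k) G x) = (deriv^^n) G x"
    by (subst sum.cong[OF refl, of _ _ "\<lambda>k. if k = n then (deriv^^k) G x else 0"]) auto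
  ultimately show "0 \<le> (-1)^n * (deriv ^^ n) G x"
    by (simp add: F_def)
qed

section \<open>Finite measures on the positive half-line\<close>

lemma AE_pos_if_nonpos_null:
  assumes "emeasure M {..0::real} = 0" "sets M = sets borel"
  shows "AE t in M. t > 0"
  by (rule AE_I[of _ _ "{..0}"]) (use assms in auto)

lemma density_density_cancel:
  fixes f g :: "'a \<Rightarrow> ennreal"
  assumes "f \<in> borel_measurable M" "g \<in> borel_measurable M" "AE x in M. f x * g x = 1"
  shows "density (density M f) g = M"
proof -
  have "density (density M f) g = density M (\<lambda>x. f x * g x)"
    by (rule density_density_eq[OF assms(1,2)])
  also have "\<dots> = density M (\<lambda>_. 1)"
    by (rule density_cong) (use assms in auto)
  finally show ?thesis by (simp add: density_1)
qed

lemma ennreal_exp_mult_exp_minus: "ennreal (exp x) * ennreal (exp (- x)) = 1"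
  by (simp add: ennreal_mult[symmetric] exp_minus)

lemma step_approximation_tendsto:
  fixes c y :: real
  shows "(\<lambda>k. max 0 (min 1 (real (Suc k) * (y - c) + 1))) \<longlonglongrightarrow> (if c \<le> y then 1 else 0)"
proof (cases "c \<le> y")
  case True
  then show ?thesis by simp
next
  case False
  obtain N :: nat where N: "real N > 1 / (c - y)" using reals_Archimedean2 by blast
  have "1 < real N * (c - y)" using N False by (simp add: field_simps)
  also have "\<dots> \<le> real (Suc k) * (c - y)" if "N \<le> k" for k
    using that False by (intro mult_right_mono) auto
  finally have large: "1 < real (Suc k) * (c - y)" if "N \<le> k" for k
    using that by blast
  have "eventually (\<lambda>k. max 0 (min 1 (real (Suc k) * (y - c) + 1)) = 0) sequentially"
    unfolding eventually_sequentially
    by (intro exI[of _ N] allI impI) (use large in \<open>force simp: algebra_simps\<close>)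
  then show ?thesis using False by (simp add: tendsto_eventually)
qed

lemma polynomial_step_approximation:
  fixes c :: real
  obtains P where "\<And>k. real_polynomial_function (P k)"
    "\<And>k y. y \<in> {0..1} \<Longrightarrow> \<bar>P k y\<bar> \<le> 2"
    "\<And>y. y \<in> {0..1} \<Longrightarrow> (\<lambda>k. P k y) \<longlonglongrightarrow> (if c \<le> y then 1 else 0)"
proof -
  define f where "f k y = max 0 (min 1 (real (Suc k) * (y - c) + 1))" for k :: nat and y :: real
  have "\<forall>k. \<exists>p. real_polynomial_function p \<and> (\<forall>y\<in>{0..1}. \<bar>f k y - p y\<bar> < 1 / real (Suc k))"
  proof
    fix k
    have "continuous_on {0..1::real} (f k)" unfolding f_def by (intro continuous_intros)
    from Stone_Weierstrass_real_polynomial_function[OF compact_Icc this, of "1 / real (Suc k)"]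
    show "\<exists>p. real_polynomial_function p \<and> (\<forall>y\<in>{0..1}. \<bar>f k y - p y\<bar> < 1 / real (Suc k))"
      by (metis of_nat_0_less_iff zero_less_Suc zero_less_divide_1_iff)
  qed
  then obtain P where "\<forall>k. real_polynomial_function (P k) \<and> (\<forall>y\<in>{0..1}. \<bar>f k y - P k y\<bar> < 1 / real (Suc k))"
    by (rule choice[THEN exE]) blast
  then have P: "\<And>k. real_polynomial_function (P k)"
    and close: "\<And>k y. y \<in> {0..1} \<Longrightarrow> \<bar>f k y - P k y\<bar> < 1 / real (Suc k)"
    by auto
  have f01: "0 \<le> f k y \<and> f k y \<le> 1" for k y unfolding f_def by auto
  have bounded: "\<bar>P k y\<bar> \<le> 2" if "y \<in> {0..1}" for k y
  proof -
    have "1 / real (Suc k) \<le> 1" by simp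
    then show ?thesis using close[OF that, of k] f01[of k y] by linarith
  qed
  have "(\<lambda>k. P k y) \<longlonglongrightarrow> (if c \<le> y then 1 else 0)" if "y \<in> {0..1}" for y
  proof -
    have "(\<lambda>k. P k y - f k y) \<longlonglongrightarrow> 0"
    proof (rule Lim_null_comparison)
      show "eventually (\<lambda>k. norm (P k y - f k y) \<le> 1 / real (Suc k)) sequentially"
        using close[OF that] by (simp add: abs_minus_commute less_imp_le)
      show "(\<lambda>k. 1 / real (Suc k)) \<longlonglongrightarrow> 0"
        by (rule LIMSEQ_inverse_real_of_nat[unfolded inverse_eq_divide])
    qed
    from tendsto_add[OF step_approximation_tendsto[where c=c and y=y] this]
    show ?thesis by (simp add: f_def)
  qed
  with P bounded show ?thesis by (rule that)
qed

locale pos_finite_measure = finite_borel_measure +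
  assumes emeasure_nonpos: "emeasure M {..0} = 0"
begin

lemma AE_pos: "AE t in M. t > 0"
  using AE_pos_if_nonpos_null[OF emeasure_nonpos M_is_borel] .

lemma measurable_borel: "f \<in> borel_measurable borel \<Longrightarrow> f \<in> borel_measurable M"
  unfolding measurable_cong_sets[OF M_is_borel refl] .

lemma integrable_exp_neg: "r \<ge> 0 \<Longrightarrow> integrable M (\<lambda>t. exp (- (r * t)))"
  by (rule integrable_const_bound[where B=1])
     (use AE_pos in \<open>auto intro: measurable_borel elim!: eventually_mono\<close>)

lemma integral_poly_exp_neg:
  "(\<integral>t. (\<Sum>i\<le>N. a i * exp (-t) ^ i) * exp (-t) \<partial>M) = (\<Sum>i\<le>N. a i * (\<integral>t. exp (- ((real i + 1) * t)) \<partial>M))"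
proof -
  have "exp (-t) ^ i * exp (-t) = exp (- ((real i + 1) * t))" for t i
    by (simp add: exp_of_nat_mult[symmetric] exp_add[symmetric] algebra_simps)
  then have "(\<Sum>i\<le>N. a i * exp (-t) ^ i) * exp (-t) = (\<Sum>i\<le>N. a i * exp (- ((real i + 1) * t)))" for t
    by (simp add: sum_distrib_right mult.assoc)
  then show ?thesis by (simp add: integral_sum integrable_exp_neg)
qed

lemma tendsto_integral_step:
  assumes P: "\<And>k. real_polynomial_function (P k)"
    and bounded: "\<And>k y. y \<in> {0..1} \<Longrightarrow> \<bar>P k y\<bar> \<le> 2"
    and lim: "\<And>y. y \<in> {0..1} \<Longrightarrow> (\<lambda>k. P k y) \<longlonglongrightarrow> (if exp (-c) \<le> y then 1 else 0)"
  shows "(\<lambda>k. \<integral>t. P k (exp (-t)) * exp (-t) \<partial>M) \<longlonglongrightarrow> (\<integral>t. indicator {..c} t * exp (-t) \<partial>M)"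
proof (rule integral_dominated_convergence[where w="\<lambda>_. 2"])
  show "(\<lambda>t. indicator {..c} t * exp (-t)) \<in> borel_measurable M"
    by (intro measurable_borel) simp
  show "(\<lambda>t. P k (exp (-t)) * exp (-t)) \<in> borel_measurable M" for k
  proof -
    have "continuous_on UNIV (P k)"
      using P continuous_on_polymonial_function real_polynomial_function_eq by blast
    then have "continuous_on UNIV (\<lambda>t. P k (exp (-t)) * exp (-t))"
      by (intro continuous_intros continuous_on_compose2[OF \<open>continuous_on UNIV (P k)\<close>]) auto
    then show ?thesis by (intro measurable_borel borel_measurable_continuous_onI)
  qed
  show "integrable M (\<lambda>_. 2::real)" by simp
  show "AE t in M. (\<lambda>k. P k (exp (-t)) * exp (-t)) \<longlonglongrightarrow> indicator {..c} t * exp (-t)"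
    using AE_pos
  proof eventually_elim
    case (elim t)
    then have "exp (-t) \<in> {0..1}" by auto
    from tendsto_mult_right[OF lim[OF this], of "exp (-t)"]
    show ?case by (simp add: indicator_def split: if_splits)
  qed
  show "AE t in M. norm (P k (exp (-t)) * exp (-t)) \<le> 2" for k
    using AE_pos
  proof eventually_elim
    case (elim t)
    then have "exp (-t) \<in> {0..1}" by auto
    then have "\<bar>P k (exp (-t))\<bar> * exp (-t) \<le> 2 * 1"
      using bounded by (intro mult_mono) auto
    then show ?case by (simp add: abs_mult)
  qed
qed

lemma finite_borel_measure_density_exp: "finite_borel_measure (density M (\<lambda>t. ennreal (exp (-t))))"
proof -
  have "emeasure (density M (\<lambda>t. ennreal (exp (-t)))) (space M) = (\<integral>\<^sup>+ t. ennreal (exp (-t)) \<partial>M)"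
    by (subst emeasure_density) (auto intro: measurable_borel nn_integral_cong)
  also have "\<dots> \<le> (\<integral>\<^sup>+ t. 1 \<partial>M)"
    using AE_pos by (intro nn_integral_mono_AE) (auto elim!: eventually_mono)
  finally have "finite_measure (density M (\<lambda>t. ennreal (exp (-t))))"
    by (intro finite_measureI) (auto simp: top_unique)
  then show ?thesis
    unfolding finite_borel_measure_def finite_borel_measure_axioms_def using M_is_borel by simp
qed

lemma cdf_density_exp: "cdf (density M (\<lambda>t. ennreal (exp (-t)))) c = (\<integral>t. indicator {..c} t * exp (-t) \<partial>M)"
proof -
  have "emeasure (density M (\<lambda>t. ennreal (exp (-t)))) {..c} = (\<integral>\<^sup>+ t. ennreal (indicator {..c} t * exp (-t)) \<partial>M)"
    by (subst emeasure_density) (auto intro!: measurable_borel nn_integral_cong simp: M_is_borel indicator_def)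
  also have "\<dots> = ennreal (\<integral>t. indicator {..c} t * exp (-t) \<partial>M)"
    by (rule nn_integral_eq_integral)
       (use AE_pos in \<open>auto intro!: integrable_const_bound[where B=1] measurable_borel
          elim!: eventually_mono simp: indicator_def\<close>)
  finally show ?thesis
    unfolding cdf_def measure_def by simp
qed

end

text \<open>By Weierstrass approximation in the variable \<open>e\<^sup>-\<^sup>t\<close>, the Laplace transform at the positive
  integers determines \<open>\<integral>\<^bsub>t\<le>c\<^esub> e\<^sup>-\<^sup>t \<rho>(dt)\<close>, i.e. the distribution function of \<open>e\<^sup>-\<^sup>t \<rho>(dt)\<close>.\<close>

lemma pos_finite_measure_eqI_laplace:
  assumes "pos_finite_measure \<rho>1" and "pos_finite_measure \<rho>2"
    and laplace: "\<And>n::nat. (\<integral>t. exp (- ((real n + 1) * t)) \<partial>\<rho>1) = (\<integral>t. exp (- ((real n + 1) * t)) \<partial>\<rho>2)"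
  shows "\<rho>1 = \<rho>2"
proof -
  interpret A: pos_finite_measure \<rho>1 by fact
  interpret B: pos_finite_measure \<rho>2 by fact
  have "(\<integral>t. indicator {..c} t * exp (-t) \<partial>\<rho>1) = (\<integral>t. indicator {..c} t * exp (-t) \<partial>\<rho>2)" for c
  proof -
    obtain P where P: "\<And>k. real_polynomial_function (P k)"
      "\<And>k y. y \<in> {0..1} \<Longrightarrow> \<bar>P k y\<bar> \<le> 2"
      "\<And>y. y \<in> {0..1} \<Longrightarrow> (\<lambda>k. P k y) \<longlonglongrightarrow> (if exp (-c) \<le> y then 1 else 0)"
      using polynomial_step_approximation[of "exp (-c)"] by blast
    have "(\<integral>t. P k (exp (-t)) * exp (-t) \<partial>\<rho>1) = (\<integral>t. P k (exp (-t)) * exp (-t) \<partial>\<rho>2)" for k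
    proof -
      obtain a N where "P k = (\<lambda>x. \<Sum>i\<le>N. a i * x^i)"
        using P(1)[of k] real_polynomial_function_iff_sum by blast
      then show ?thesis by (simp add: A.integral_poly_exp_neg B.integral_poly_exp_neg laplace)
    qed
    with A.tendsto_integral_step[OF P] B.tendsto_integral_step[OF P] show ?thesis
      using LIMSEQ_unique by fastforce
  qed
  then have "density \<rho>1 (\<lambda>t. ennreal (exp (-t))) = density \<rho>2 (\<lambda>t. ennreal (exp (-t)))"
    by (intro cdf_unique' A.finite_borel_measure_density_exp B.finite_borel_measure_density_exp)
       (simp add: A.cdf_density_exp B.cdf_density_exp fun_eq_iff)
  then have "density (density \<rho>1 (\<lambda>t. ennreal (exp (-t)))) (\<lambda>t. ennreal (exp t))
      = density (density \<rho>2 (\<lambda>t. ennreal (exp (-t)))) (\<lambda>t. ennreal (exp t))"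
    by simp
  then show ?thesis
    by (subst (asm) (1 2) density_density_cancel)
       (auto intro: A.measurable_borel B.measurable_borel simp: mult.commute ennreal_exp_mult_exp_minus)
qed

section \<open>L\'evy measures\<close>

lemma one_minus_exp_le:
  fixes l t :: real
  assumes "l > 0" "t \<ge> 0"
  shows "1 - exp (-(l*t)) \<le> max 1 l * min 1 t"
proof (cases "t \<le> 1")
  case True
  have "1 - exp (-(l*t)) \<le> l * t" using exp_ge_add_one_self[of "-(l*t)"] by simp
  also have "\<dots> \<le> max 1 l * t" using assms by (intro mult_right_mono) auto
  finally show ?thesis using True by simp
next
  case False
  have "1 - exp (-(l*t)) \<le> 1" by simp
  then show ?thesis using False by (simp add: le_max_iff_disj)
qed

lemma exp_mult_one_minus_exp_le:
  fixes l t :: real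
  assumes "l \<ge> 0" "t > 0"
  shows "\<bar>exp (-(l*t)) * (1 - exp (-t))\<bar> \<le> min 1 t"
proof -
  have "exp (-(l*t)) \<le> 1" "0 \<le> 1 - exp (-t)" "1 - exp (-t) \<le> min 1 t"
    using assms one_minus_exp_le[of 1 t] by auto
  then have "exp (-(l*t)) * (1 - exp (-t)) \<le> 1 * min 1 t"
    by (intro mult_mono) auto
  then show ?thesis using \<open>0 \<le> 1 - exp (-t)\<close> by simp
qed

locale levy_measure =
  fixes \<nu> :: "real measure"
  assumes sets_eq_borel: "sets \<nu> = sets borel" and emeasure_nonpos: "emeasure \<nu> {..0} = 0"
    and nn_integral_min_1: "(\<integral>\<^sup>+ t. ennreal (min 1 t) \<partial>\<nu>) < \<infinity>"
begin

lemma AE_pos: "AE t in \<nu>. t > 0"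
  using AE_pos_if_nonpos_null[OF emeasure_nonpos sets_eq_borel] .

lemma measurable_borel: "f \<in> borel_measurable borel \<Longrightarrow> f \<in> borel_measurable \<nu>"
  unfolding measurable_cong_sets[OF sets_eq_borel refl] .

lemma integrable_min_1: "integrable \<nu> (\<lambda>t. min 1 t)"
proof -
  have "(\<integral>\<^sup>+ t. ennreal (norm (min 1 t)) \<partial>\<nu>) = (\<integral>\<^sup>+ t. ennreal (min 1 t) \<partial>\<nu>)"
    using AE_pos by (intro nn_integral_cong_AE) (auto elim!: eventually_mono)
  then show ?thesis
    using nn_integral_min_1 by (intro integrableI_bounded measurable_borel) auto
qed

lemma integrable_if_bounded_min_1:
  assumes "f \<in> borel_measurable borel" "AE t in \<nu>. t > 0 \<longrightarrow> \<bar>f t\<bar> \<le> C * min 1 t"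
  shows "integrable \<nu> f"
proof (rule Bochner_Integration.integrable_bound)
  show "integrable \<nu> (\<lambda>t. C * min 1 t)" using integrable_min_1 by simp
  show "AE t in \<nu>. norm (f t) \<le> norm (C * min 1 t)"
    using AE_pos assms(2) by eventually_elim auto
qed (use assms(1) measurable_borel in auto)

lemma integrable_one_minus_exp: "l > 0 \<Longrightarrow> integrable \<nu> (\<lambda>t. 1 - exp (-(l*t)))"
  by (rule integrable_if_bounded_min_1[where C="max 1 l"]) (auto intro!: AE_I2 one_minus_exp_le)

lemma integral_one_minus_exp_diff:
  assumes "l > 0"
  shows "(\<integral>t. 1 - exp (-((l+1)*t)) \<partial>\<nu>) - (\<integral>t. 1 - exp (-(l*t)) \<partial>\<nu>)
    = (\<integral>t. exp (-(l*t)) * (1 - exp (-t)) \<partial>\<nu>)"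
proof -
  have "(\<integral>t. 1 - exp (-((l+1)*t)) \<partial>\<nu>) - (\<integral>t. 1 - exp (-(l*t)) \<partial>\<nu>)
      = (\<integral>t. (1 - exp (-((l+1)*t))) - (1 - exp (-(l*t))) \<partial>\<nu>)"
    using assms
      by (intro Bochner_Integration.integral_diff[symmetric] integrable_one_minus_exp) auto
  also have "\<dots> = (\<integral>t. exp (-(l*t)) * (1 - exp (-t)) \<partial>\<nu>)"
    by (intro Bochner_Integration.integral_cong) (simp_all add: exp_add[symmetric] algebra_simps)
  finally show ?thesis .
qed

lemma tendsto_integral_exp_mult_one_minus_exp:
  "(\<lambda>n. \<integral>t. exp (-(real (Suc n)*t)) * (1 - exp (-t)) \<partial>\<nu>) \<longlonglongrightarrow> 0"
proof -
  have "(\<lambda>n. \<integral>t. exp (-(real (Suc n)*t)) * (1 - exp (-t)) \<partial>\<nu>) \<longlonglongrightarrow> (\<integral>t. 0 \<partial>\<nu>)"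
  proof (rule integral_dominated_convergence[where w="\<lambda>t. min 1 t"])
    show "AE t in \<nu>. (\<lambda>n. exp (-(real (Suc n)*t)) * (1 - exp (-t))) \<longlonglongrightarrow> 0"
      using AE_pos
    proof eventually_elim
      case (elim t)
      have "filterlim (\<lambda>n. t * real (Suc n)) at_top sequentially"
        by (rule filterlim_tendsto_pos_mult_at_top[OF tendsto_const elim
              filterlim_compose[OF filterlim_real_sequentially filterlim_Suc]])
      then have "filterlim (\<lambda>n. -(real (Suc n)*t)) at_bot sequentially"
        by (simp add: filterlim_uminus_at_top mult.commute)
      from tendsto_mult_left_zero[OF filterlim_compose[OF exp_at_bot this]]
      show ?case by (simp add: o_def)
    qed
    show "AE t in \<nu>. norm (exp (-(real (Suc n)*t)) * (1 - exp (-t))) \<le> min 1 t" for n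
      using AE_pos
        by eventually_elim (metis exp_mult_one_minus_exp_le of_nat_0_le_iff real_norm_def)
  qed (auto intro: measurable_borel integrable_min_1)
  then show ?thesis by simp
qed

text \<open>The finite measure \<open>(1 - e\<^sup>-\<^sup>t) \<nu>(dt)\<close>; its Laplace transform is the difference quotient
  \<open>\<phi>(\<lambda> + 1) - \<phi>(\<lambda>)\<close> of the Bernstein function of \<open>\<nu>\<close>.\<close>

definition damped :: "real measure" where
  "damped = density \<nu> (\<lambda>t. ennreal (1 - exp (-t)))"

lemma pos_finite_measure_damped: "pos_finite_measure damped"
proof -
  have m: "(\<lambda>t. ennreal (1 - exp (-t))) \<in> borel_measurable \<nu>" by (intro measurable_borel) simp
  have "emeasure damped (space damped) = (\<integral>\<^sup>+ t. ennreal (1 - exp (-t)) \<partial>\<nu>)"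
    unfolding damped_def by (subst emeasure_density) (auto intro: m nn_integral_cong)
  also have "\<dots> \<le> (\<integral>\<^sup>+ t. ennreal (min 1 t) \<partial>\<nu>)"
    using AE_pos
  proof (intro nn_integral_mono_AE, eventually_elim)
    case (elim t)
    then show ?case using one_minus_exp_le[of 1 t] by (simp add: ennreal_leI)
  qed
  finally have "finite_measure damped"
    using nn_integral_min_1 by (intro finite_measureI) (auto simp: top.not_eq_extremum)
  moreover have "emeasure damped {..0} = 0"
  proof -
    have "emeasure damped {..0} = (\<integral>\<^sup>+ t. ennreal (1 - exp (-t)) * indicator {..0} t \<partial>\<nu>)"
      unfolding damped_def by (rule emeasure_density[OF m]) (simp add: sets_eq_borel)
    also have "\<dots> = (\<integral>\<^sup>+ t. 0 \<partial>\<nu>)"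
      using AE_pos by (intro nn_integral_cong_AE) (auto elim!: eventually_mono simp: indicator_def)
    finally show ?thesis by simp
  qed
  ultimately show ?thesis
    unfolding pos_finite_measure_def pos_finite_measure_axioms_def finite_borel_measure_def
      finite_borel_measure_axioms_def
    by (simp add: damped_def sets_eq_borel)
qed

lemma integral_exp_damped:
  "(\<integral>t. exp (-(l*t)) \<partial>damped) = (\<integral>t. exp (-(l*t)) * (1 - exp (-t)) \<partial>\<nu>)"
  unfolding damped_def
  by (subst integral_density) (use AE_pos in \<open>auto intro!: measurable_borel elim!: eventually_mono simp: mult.commute\<close>)

lemma density_damped_inverse:
  "density damped (\<lambda>t. ennreal (if t > 0 then 1 / (1 - exp (-t)) else 0)) = \<nu>"
  unfolding damped_def
proof (rule density_density_cancel)
  show "AE t in \<nu>. ennreal (1 - exp (-t)) * ennreal (if t > 0 then 1 / (1 - exp (-t)) else 0) = 1"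
    using AE_pos by eventually_elim (simp add: ennreal_mult[symmetric])
qed (auto intro: measurable_borel)

end

lemma levy_triple_imp_levy_measure: "levy_triple f a b \<mu> \<Longrightarrow> levy_measure \<mu>"
  unfolding levy_triple_def levy_measure_def by auto

lemma levy_triple_eq:
  "levy_triple f a b \<mu> \<Longrightarrow> l > 0 \<Longrightarrow> f l = a + b * l + (\<integral>t. 1 - exp (-(l*t)) \<partial>\<mu>)"
  unfolding levy_triple_def by (simp only: minus_mult_left)

text \<open>Taking differences \<open>\<lambda> \<mapsto> \<lambda> + 1\<close> removes \<open>a\<close>; letting \<open>\<lambda> \<rightarrow> \<infinity>\<close> shows \<open>b = 0\<close>; what is left
  is the equality of the Laplace transforms of the damped measures.\<close>

lemma levy_measure_unique:
  assumes "levy_measure \<nu>1" and "levy_measure \<nu>2"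
    and eq: "\<And>l. l > 0 \<Longrightarrow> a + b*l + (\<integral>t. 1 - exp (-(l*t)) \<partial>\<nu>1) = (\<integral>t. 1 - exp (-(l*t)) \<partial>\<nu>2)"
  shows "\<nu>1 = \<nu>2"
proof -
  interpret A: levy_measure \<nu>1 by fact
  interpret B: levy_measure \<nu>2 by fact
  have diff: "b + (\<integral>t. exp (-(l*t)) * (1 - exp (-t)) \<partial>\<nu>1) = (\<integral>t. exp (-(l*t)) * (1 - exp (-t)) \<partial>\<nu>2)"
    if "l > 0" for l
    using eq[of "l + 1"] eq[of l] that A.integral_one_minus_exp_diff[OF that]
      B.integral_one_minus_exp_diff[OF that]
    by (simp add: algebra_simps)
  have "(\<lambda>n. b + (\<integral>t. exp (-(real (Suc n)*t)) * (1 - exp (-t)) \<partial>\<nu>1)) \<longlonglongrightarrow> b + 0"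
    by (intro tendsto_add tendsto_const A.tendsto_integral_exp_mult_one_minus_exp)
  moreover have "(\<lambda>n. b + (\<integral>t. exp (-(real (Suc n)*t)) * (1 - exp (-t)) \<partial>\<nu>1)) \<longlonglongrightarrow> 0"
    using B.tendsto_integral_exp_mult_one_minus_exp diff[of "real (Suc _)"] by simp
  ultimately have "b = 0" using LIMSEQ_unique by fastforce
  have "A.damped = B.damped"
  proof (rule pos_finite_measure_eqI_laplace[OF A.pos_finite_measure_damped B.pos_finite_measure_damped])
    fix n :: nat
    show "(\<integral>t. exp (- ((real n + 1) * t)) \<partial>A.damped) = (\<integral>t. exp (- ((real n + 1) * t)) \<partial>B.damped)"
      using diff[of "real n + 1"] \<open>b = 0\<close> by (simp add: A.integral_exp_damped B.integral_exp_damped)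
  qed
  then show ?thesis using A.density_damped_inverse B.density_damped_inverse by metis
qed

section \<open>Differentiating Laplace-type integrals\<close>

lemma difference_quotient_le:
  fixes k k' :: "real \<Rightarrow> real"
  assumes "\<forall>z. \<bar>z - x0\<bar> < \<delta> \<longrightarrow> (k has_real_derivative k' z) (at z)"
    and "\<forall>z. \<bar>z - x0\<bar> < \<delta> \<longrightarrow> \<bar>k' z\<bar> \<le> w"
    and "\<bar>y - x0\<bar> < \<delta>" "y \<noteq> x0"
  shows "\<bar>(k y - k x0) / (y - x0)\<bar> \<le> w"
proof -
  have "norm (k y - k x0) \<le> w * norm (y - x0)"
  proof (rule field_differentiable_bound[of "ball x0 \<delta>"])
    show "(k has_field_derivative k' z) (at z within ball x0 \<delta>)" "norm (k' z) \<le> w"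
      if "z \<in> ball x0 \<delta>" for z
      using assms(1,2) that
        by (auto intro: has_field_derivative_at_within simp: dist_real_def abs_minus_commute)
  qed (use assms(3) in \<open>auto simp: dist_real_def abs_minus_commute\<close>)
  moreover have "\<bar>y - x0\<bar> > 0" using assms(4) by simp
  ultimately show ?thesis by (simp add: abs_divide pos_divide_le_eq)
qed

lemma DERIV_integral_parameter:
  fixes K K' :: "real \<Rightarrow> real \<Rightarrow> real" and M :: "real measure" and W :: "real \<Rightarrow> real"
  assumes d: "\<delta> > 0"
    and int: "\<And>y. \<bar>y - x0\<bar> < \<delta> \<Longrightarrow> integrable M (K y)"
    and meas: "K' x0 \<in> borel_measurable M"
    and der: "AE t in M. \<forall>y. \<bar>y - x0\<bar> < \<delta> \<longrightarrow> ((\<lambda>y. K y t) has_real_derivative K' y t) (at y)"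
    and W: "integrable M W"
    and deriv_bound: "AE t in M. \<forall>y. \<bar>y - x0\<bar> < \<delta> \<longrightarrow> \<bar>K' y t\<bar> \<le> W t"
  shows "((\<lambda>y. \<integral>t. K y t \<partial>M) has_real_derivative (\<integral>t. K' x0 t \<partial>M)) (at x0)"
  unfolding has_field_derivative_iff tendsto_at_iff_sequentially
proof (intro allI impI)
  fix X :: "nat \<Rightarrow> real"
  assume X: "\<forall>i. X i \<in> UNIV - {x0}" "X \<longlonglongrightarrow> x0"
  from X(2) d obtain N where N: "\<And>i. i \<ge> N \<Longrightarrow> dist (X i) x0 < \<delta>"
    unfolding lim_sequentially by blast
  define Y where "Y = (\<lambda>i. X (i + N))"
  have Y: "\<And>i. \<bar>Y i - x0\<bar> < \<delta>" "\<And>i. Y i \<noteq> x0" "Y \<longlonglongrightarrow> x0"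
    using N X unfolding Y_def dist_real_def by (auto intro: LIMSEQ_ignore_initial_segment)
  have q: "(\<integral>t. K (Y i) t \<partial>M) - (\<integral>t. K x0 t \<partial>M) = (\<integral>t. K (Y i) t - K x0 t \<partial>M)" for i
    using Bochner_Integration.integral_diff[OF int[OF Y(1)] int[of x0]] d by simp
  have "(\<lambda>i. \<integral>t. (K (Y i) t - K x0 t) / (Y i - x0) \<partial>M) \<longlonglongrightarrow> (\<integral>t. K' x0 t \<partial>M)"
  proof (rule integral_dominated_convergence[where w=W])
    show "(\<lambda>t. (K (Y i) t - K x0 t) / (Y i - x0)) \<in> borel_measurable M" for i
      using int[OF Y(1)[of i]] int[of x0] d
        by (intro borel_measurable_divide borel_measurable_diff) auto
    show "AE t in M. (\<lambda>i. (K (Y i) t - K x0 t) / (Y i - x0)) \<longlonglongrightarrow> K' x0 t"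
      using der
    proof eventually_elim
      case (elim t)
      then have "((\<lambda>y. (K y t - K x0 t) / (y - x0)) \<longlongrightarrow> K' x0 t) (at x0)"
        using d by (simp add: has_field_derivative_iff)
      then show ?case
        unfolding tendsto_at_iff_sequentially o_def using Y(2,3) by blast
    qed
    show "AE t in M. norm ((K (Y i) t - K x0 t) / (Y i - x0)) \<le> W t" for i
      using der deriv_bound
      by eventually_elim (use difference_quotient_le[OF _ _ Y(1,2)] in simp)
  qed (fact meas W)+
  then have "(\<lambda>i. ((\<integral>t. K (Y i) t \<partial>M) - (\<integral>t. K x0 t \<partial>M)) / (Y i - x0)) \<longlonglongrightarrow> (\<integral>t. K' x0 t \<partial>M)"
    unfolding q by simp
  then have "(\<lambda>i. ((\<lambda>y. ((\<integral>t. K y t \<partial>M) - (\<integral>t. K x0 t \<partial>M)) / (y - x0)) \<circ> X) (i + N))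
      \<longlonglongrightarrow> (\<integral>t. K' x0 t \<partial>M)"
    by (simp add: Y_def o_def)
  then show "((\<lambda>y. ((\<integral>t. K y t \<partial>M) - (\<integral>t. K x0 t \<partial>M)) / (y - x0)) \<circ> X) \<longlonglongrightarrow> (\<integral>t. K' x0 t \<partial>M)"
    by (rule LIMSEQ_offset)
qed

lemma power_div_fact_le_exp:
  fixes x :: real
  assumes "x \<ge> 0"
  shows "x^n / fact n \<le> exp x"
proof -
  have "(\<lambda>n. x^n / fact n) sums exp x"
    using exp_converges[of x] by (simp add: divide_inverse mult.commute)
  then show ?thesis
    using sum_le_suminf[of "\<lambda>n. x^n / fact n" "{n}"] assms by (simp add: sums_iff)
qed

lemma power_mult_exp_le:
  fixes t \<eta> :: real
  assumes "t \<ge> 0" "\<eta> > 0"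
  shows "t^m * exp (-(\<eta>*t)) \<le> fact m / \<eta>^m"
proof -
  have "(\<eta>*t)^m / fact m \<le> exp (\<eta>*t)"
    using assms by (intro power_div_fact_le_exp) auto
  then have "\<eta>^m * t^m \<le> fact m * exp (\<eta>*t)"
    by (simp add: field_simps power_mult_distrib)
  then show ?thesis
    using assms by (simp add: exp_minus field_simps)
qed

lemma power_mult_exp_le_min_1:
  fixes t y \<eta> :: real
  assumes "t > 0" "\<eta> > 0" "y \<ge> \<eta>" "n \<ge> 1"
  shows "t^n * exp (-(y*t)) \<le> max 1 (fact n / \<eta>^n) * min 1 t"
proof (cases "t \<le> 1")
  case True
  have "t^n \<le> t^1" using True assms(1,4) by (intro power_decreasing) auto
  moreover have "exp (-(y*t)) \<le> 1" using assms by simp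
  ultimately have "t^n * exp (-(y*t)) \<le> t * 1"
    using assms(1) by (intro mult_mono) auto
  also have "\<dots> \<le> max 1 (fact n / \<eta>^n) * t"
    using mult_right_mono[of 1 "max 1 (fact n / \<eta>^n)" t] assms(1) by simp
  finally show ?thesis using True by simp
next
  case False
  have "exp (-(y*t)) \<le> exp (-(\<eta>*t))" using assms by (simp add: mult_right_mono)
  then have "t^n * exp (-(y*t)) \<le> t^n * exp (-(\<eta>*t))" using assms(1) by (intro mult_left_mono) auto
  also have "\<dots> \<le> fact n / \<eta>^n" using power_mult_exp_le[of t \<eta> n] assms by simp
  finally show ?thesis using False by simp
qed

context levy_measure
begin

definition bernstein_fun :: "real \<Rightarrow> real" where
  "bernstein_fun y = (\<integral>t. 1 - exp (-(y*t)) \<partial>\<nu>)"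

definition laplace_moment :: "nat \<Rightarrow> real \<Rightarrow> real" where
  "laplace_moment n y = (\<integral>t. t^n * exp (-(y*t)) \<partial>\<nu>)"

lemma integrable_power_mult_exp: "y > 0 \<Longrightarrow> n \<ge> 1 \<Longrightarrow> integrable \<nu> (\<lambda>t. t^n * exp (-(y*t)))"
  by (rule integrable_if_bounded_min_1[where C="max 1 (fact n / y^n)"])
     (auto intro!: AE_I2 simp: power_mult_exp_le_min_1)

lemma half_ball_pos:
  fixes x0 y :: real
  assumes "x0 > 0" "\<bar>y - x0\<bar> < x0 / 2"
  shows "y \<ge> x0 / 2" "y > 0"
  using assms by (auto simp: abs_if split: if_splits)

lemma DERIV_laplace_moment:
  assumes "x0 > 0" "n \<ge> 1"
  shows "(laplace_moment n has_real_derivative - laplace_moment (Suc n) x0) (at x0)"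
proof -
  define C where "C = max 1 (fact (Suc n) / (x0/2)^Suc n)"
  have "((\<lambda>y. \<integral>t. t^n * exp (-(y*t)) \<partial>\<nu>) has_real_derivative (\<integral>t. - (t^Suc n * exp (-(x0*t))) \<partial>\<nu>)) (at x0)"
  proof (rule DERIV_integral_parameter[where \<delta>="x0/2" and W="\<lambda>t. C * min 1 t"])
    show "integrable \<nu> (\<lambda>t. t^n * exp (-(y*t)))" if "\<bar>y - x0\<bar> < x0/2" for y
      using half_ball_pos[OF assms(1) that] assms(2) by (intro integrable_power_mult_exp)
    show "AE t in \<nu>. \<forall>y. \<bar>y - x0\<bar> < x0/2 \<longrightarrow>
        ((\<lambda>y. t^n * exp (-(y*t))) has_real_derivative - (t^Suc n * exp (-(y*t)))) (at y)"
      by (intro AE_I2 allI impI) (auto intro!: derivative_eq_intros simp: algebra_simps)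
    show "AE t in \<nu>. \<forall>y. \<bar>y - x0\<bar> < x0/2 \<longrightarrow> \<bar>- (t^Suc n * exp (-(y*t)))\<bar> \<le> C * min 1 t"
      using AE_pos
    proof (eventually_elim, intro allI impI)
      fix t y :: real
      assume "t > 0" "\<bar>y - x0\<bar> < x0/2"
      then show "\<bar>- (t^Suc n * exp (-(y*t)))\<bar> \<le> C * min 1 t"
        using power_mult_exp_le_min_1[of t "x0/2" y "Suc n"] half_ball_pos[OF assms(1)] assms
        by (simp add: C_def)
    qed
  qed (use assms integrable_min_1 in \<open>auto intro: measurable_borel\<close>)
  then show ?thesis unfolding laplace_moment_def by simp
qed

lemma DERIV_bernstein_fun:
  assumes "x0 > 0"
  shows "(bernstein_fun has_real_derivative laplace_moment 1 x0) (at x0)"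
proof -
  define C where "C = max 1 (fact 1 / (x0/2)^1)"
  have "((\<lambda>y. \<integral>t. 1 - exp (-(y*t)) \<partial>\<nu>) has_real_derivative (\<integral>t. t^1 * exp (-(x0*t)) \<partial>\<nu>)) (at x0)"
  proof (rule DERIV_integral_parameter[where \<delta>="x0/2" and W="\<lambda>t. C * min 1 t"])
    show "integrable \<nu> (\<lambda>t. 1 - exp (-(y*t)))" if "\<bar>y - x0\<bar> < x0/2" for y
      using half_ball_pos[OF assms that] by (intro integrable_one_minus_exp)
    show "AE t in \<nu>. \<forall>y. \<bar>y - x0\<bar> < x0/2 \<longrightarrow>
        ((\<lambda>y. 1 - exp (-(y*t))) has_real_derivative t^1 * exp (-(y*t))) (at y)"
      by (intro AE_I2 allI impI) (auto intro!: derivative_eq_intros simp: algebra_simps)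
    show "AE t in \<nu>. \<forall>y. \<bar>y - x0\<bar> < x0/2 \<longrightarrow> \<bar>t^1 * exp (-(y*t))\<bar> \<le> C * min 1 t"
      using AE_pos
    proof (eventually_elim, intro allI impI)
      fix t y :: real
      assume "t > 0" "\<bar>y - x0\<bar> < x0/2"
      then show "\<bar>t^1 * exp (-(y*t))\<bar> \<le> C * min 1 t"
        using power_mult_exp_le_min_1[of t "x0/2" y 1] half_ball_pos[OF assms] assms
        by (simp add: C_def)
    qed
  qed (use assms integrable_min_1 in \<open>auto intro: measurable_borel\<close>)
  then show ?thesis unfolding laplace_moment_def bernstein_fun_def by simp
qed

lemma higher_deriv_bernstein_fun:
  assumes "\<And>y. y > 0 \<Longrightarrow> f y = bernstein_fun y" and "y > 0"
  shows "(deriv ^^ Suc n) f y = (-1)^n * laplace_moment (Suc n) y"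
  using assms(2)
proof (induction n arbitrary: y)
  case 0
  have "eventually (\<lambda>z. f z = bernstein_fun z) (nhds y)"
    using eventually_nhds_in_open[of "{0<..}" y] 0 assms(1) by (auto elim!: eventually_mono)
  then have "deriv f y = deriv bernstein_fun y" by (rule deriv_cong_ev) simp
  also have "\<dots> = laplace_moment 1 y" by (rule DERIV_imp_deriv[OF DERIV_bernstein_fun[OF 0]])
  finally show ?case by simp
next
  case (Suc n)
  have "eventually (\<lambda>z. (deriv ^^ Suc n) f z = (-1)^n * laplace_moment (Suc n) z) (nhds y)"
    using eventually_nhds_in_open[of "{0<..}" y] Suc by (auto elim!: eventually_mono)
  then have "(deriv ^^ Suc (Suc n)) f y = deriv (\<lambda>z. (-1)^n * laplace_moment (Suc n) z) y"
    by (simp add: deriv_cong_ev)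
  also have "\<dots> = (-1)^n * (- laplace_moment (Suc (Suc n)) y)"
    by (intro DERIV_imp_deriv DERIV_cmult DERIV_laplace_moment) (use Suc.prems in auto)
  finally show ?case by simp
qed

end


lemma enn2ereal_eq_ereal_enn2real: "x \<noteq> top \<Longrightarrow> enn2ereal x = ereal (enn2real x)"
  by (metis enn2ereal_eq_top_iff enn2ereal_nonneg ereal_real' real_of_ereal_enn2ereal
      abs_ereal_ge0 ereal_infty_less_eq2(1) ereal_less_eq(1) ereal_less_eq(2))

lemma exp_minus_one_le:
  fixes y :: real
  assumes "y \<ge> 0"
  shows "exp y - 1 \<le> y * exp y"
proof -
  have "1 - y \<le> exp (-y)" using exp_ge_add_one_self[of "-y"] by simp
  then have "(1 - y) * exp y \<le> exp (-y) * exp y" by (intro mult_right_mono) auto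
  then show ?thesis by (simp add: exp_minus field_simps)
qed

lemma sums_power_mult_exp:
  fixes t r :: real
  shows "(\<lambda>n. t^(Suc n) * (r^n / fact n)) sums (t * exp (r*t))"
proof -
  have "(\<lambda>n. (r*t)^n / fact n) sums exp (r*t)"
    using exp_converges[of "r*t"] by (simp add: divide_inverse mult.commute)
  from sums_mult[OF this, of t] show ?thesis by (simp add: power_mult_distrib field_simps)
qed

lemma sums_exp_minus_one:
  fixes t s :: real
  shows "(\<lambda>n. t^(Suc n) * (s^(Suc n) / fact (Suc n))) sums (exp (s*t) - 1)"
proof -
  have "(\<lambda>n. (s*t)^n / fact n) sums exp (s*t)"
    using exp_converges[of "s*t"] by (simp add: divide_inverse mult.commute)
  then have "(\<lambda>n. (s*t)^(Suc n) / fact (Suc n)) sums (exp (s*t) - 1)"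
    by (subst sums_Suc_iff) simp
  then show ?thesis by (simp add: power_mult_distrib field_simps)
qed

lemma neg_one_power_mult_neg_power: "(-1::real)^n * (-s)^(Suc n) = -(s^(Suc n))"
  by (induction n) (auto simp: algebra_simps)

context levy_measure
begin

definition moment :: "nat \<Rightarrow> ennreal" where
  "moment n = (\<integral>\<^sup>+ t. ennreal (t^n) \<partial>\<nu>)"

lemma laplace_moment_eq_nn_integral:
  assumes "y > 0" "n \<ge> 1"
  shows "ereal (laplace_moment n y) = enn2ereal (\<integral>\<^sup>+ t. ennreal (t^n * exp (-(y*t))) \<partial>\<nu>)"
proof -
  have i: "integrable \<nu> (\<lambda>t. t^n * exp (-(y*t)))" by (rule integrable_power_mult_exp[OF assms])
  have nn: "AE t in \<nu>. 0 \<le> t^n * exp (-(y*t))" using AE_pos by eventually_elim simp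
  have "(\<integral>\<^sup>+ t. ennreal (t^n * exp (-(y*t))) \<partial>\<nu>) = ennreal (laplace_moment n y)"
    unfolding laplace_moment_def by (rule nn_integral_eq_integral[OF i nn])
  moreover have "laplace_moment n y \<ge> 0"
    unfolding laplace_moment_def using nn by (rule integral_nonneg_AE)
  ultimately show ?thesis by simp
qed

lemma laplace_moment_tendsto_moment:
  assumes n: "n \<ge> 1"
  shows "((\<lambda>y. ereal (laplace_moment n y)) \<longlongrightarrow> enn2ereal (moment n)) (at_right 0)"
  unfolding tendsto_at_iff_sequentially
proof (intro allI impI)
  fix X :: "nat \<Rightarrow> real" assume X: "\<forall>i. X i \<in> {0<..} - {0}" "X \<longlonglongrightarrow> 0"
  define N where "N = (\<lambda>i. \<integral>\<^sup>+ t. ennreal (t^n * exp (-(X i*t))) \<partial>\<nu>)"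
  have eqN: "ereal (laplace_moment n (X i)) = enn2ereal (N i)" for i
    unfolding N_def using laplace_moment_eq_nn_integral[of "X i" n] X(1) n by auto
  have up: "N i \<le> moment n" for i
    unfolding N_def moment_def using AE_pos
  proof (intro nn_integral_mono_AE, eventually_elim)
    fix t :: real assume t: "t > 0"
    have "X i > 0" using X(1) by blast
    then have "0 \<le> X i * t" using t by simp
    then have "t^n * exp (-(X i*t)) \<le> t^n * 1" using t by (intro mult_left_mono) auto
    then show "ennreal (t^n * exp (-(X i*t))) \<le> ennreal (t^n)" by (intro ennreal_leI) simp
  qed
  have lim_pt: "(\<lambda>i. ennreal (t^n * exp (-(X i*t)))) \<longlonglongrightarrow> ennreal (t^n)" for t :: real
  proof -
    have "(\<lambda>i. t^n * exp (-(X i*t))) \<longlonglongrightarrow> t^n * exp (-(0*t))"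
      using X(2) by (intro tendsto_intros)
    then show ?thesis by (intro tendsto_ennrealI) simp
  qed
  have "moment n = (\<integral>\<^sup>+ t. liminf (\<lambda>i. ennreal (t^n * exp (-(X i*t)))) \<partial>\<nu>)"
    unfolding moment_def
      by (intro nn_integral_cong) (simp add: lim_imp_Liminf[OF trivial_limit_sequentially lim_pt])
  also have "\<dots> \<le> liminf N"
    unfolding N_def by (rule nn_integral_liminf) (intro measurable_borel, simp)
  finally have lo: "moment n \<le> liminf N" .
  have hi: "limsup N \<le> moment n" using up by (intro Limsup_bounded) (auto intro!: always_eventually)
  have "liminf N \<le> limsup N" by (rule Liminf_le_Limsup) simp
  then have "liminf N = moment n" "limsup N = moment n" using lo hi by auto
  then have "N \<longlonglongrightarrow> moment n" by (intro Liminf_eq_Limsup) auto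
  then have "(\<lambda>i. enn2ereal (N i)) \<longlonglongrightarrow> enn2ereal (moment n)" by simp
  then show "((\<lambda>y. ereal (laplace_moment n y)) \<circ> X) \<longlonglongrightarrow> enn2ereal (moment n)" by (simp add: o_def eqN)
qed

lemma bernstein_fun_tendsto_0: "(bernstein_fun \<longlongrightarrow> 0) (at_right 0)"
  unfolding tendsto_at_iff_sequentially
proof (intro allI impI)
  fix X :: "nat \<Rightarrow> real" assume X: "\<forall>i. X i \<in> {0<..} - {0}" "X \<longlonglongrightarrow> 0"
  from X(2) obtain N where N: "\<And>i. i \<ge> N \<Longrightarrow> dist (X i) 0 < 1"
    unfolding lim_sequentially by (meson zero_less_one)
  define Y where "Y = (\<lambda>i. X (i + N))"
  have Y1: "Y i < 1" for i
    using N[of "i + N"] unfolding Y_def dist_real_def by (simp add: abs_less_iff)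
  have Y: "\<And>i. Y i < 1" "\<And>i. Y i > 0" "Y \<longlonglongrightarrow> 0"
    using Y1 X unfolding Y_def
    by (auto intro: LIMSEQ_ignore_initial_segment)
  have "(\<lambda>i. \<integral>t. 1 - exp (-(Y i*t)) \<partial>\<nu>) \<longlonglongrightarrow> (\<integral>t. 0 \<partial>\<nu>)"
  proof (rule integral_dominated_convergence[where w="\<lambda>t. min 1 t"])
    show "(\<lambda>t. 0::real) \<in> borel_measurable \<nu>" by simp
    show "(\<lambda>t. 1 - exp (-(Y i*t))) \<in> borel_measurable \<nu>" for i by (intro measurable_borel) simp
    show "integrable \<nu> (\<lambda>t. min 1 t)" by (rule integrable_min_1)
    show "AE t in \<nu>. (\<lambda>i. 1 - exp (-(Y i*t))) \<longlonglongrightarrow> 0"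
    proof (intro AE_I2)
      fix t :: real
      have "(\<lambda>i. 1 - exp (-(Y i*t))) \<longlonglongrightarrow> 1 - exp (-(0*t))" using Y(3) by (intro tendsto_intros)
      then show "(\<lambda>i. 1 - exp (-(Y i*t))) \<longlonglongrightarrow> 0" by simp
    qed
    show "AE t in \<nu>. norm (1 - exp (-(Y i*t))) \<le> min 1 t" for i
      using AE_pos
    proof eventually_elim
      fix t :: real assume t: "t > 0"
      have a: "0 \<le> 1 - exp (-(Y i*t))" using Y(2)[of i] t by simp
      have "Y i * t \<le> 1 * t" using Y(1)[of i] t by (intro mult_right_mono) auto
      then have "1 - exp (-(Y i*t)) \<le> 1 - exp (-(1*t))" by simp
      also have "\<dots> \<le> max 1 1 * min 1 t" by (rule one_minus_exp_le) (use t in auto)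
      finally show "norm (1 - exp (-(Y i*t))) \<le> min 1 t" using a by simp
    qed
  qed
  then have "(\<lambda>i. bernstein_fun (X (i + N))) \<longlonglongrightarrow> 0" by (simp add: bernstein_fun_def Y_def)
  then show "(bernstein_fun \<circ> X) \<longlonglongrightarrow> 0" unfolding o_def by (rule LIMSEQ_offset)
qed

lemma deriv_at_0plus_0:
  assumes eq: "\<And>y. y > 0 \<Longrightarrow> f y = bernstein_fun y"
  shows "deriv_at_0plus f 0 = 0"
proof -
  have ev: "eventually (\<lambda>y. ereal (bernstein_fun y) = ereal ((deriv ^^ 0) f y)) (at_right 0)"
    using eventually_at_right_less[of 0] by eventually_elim (simp add: eq)
  have "((\<lambda>y. ereal (bernstein_fun y)) \<longlongrightarrow> ereal 0) (at_right 0)"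
    using bernstein_fun_tendsto_0 by (rule tendsto_ereal)
  then have "((\<lambda>y. ereal ((deriv ^^ 0) f y)) \<longlongrightarrow> 0) (at_right 0)"
    using tendsto_cong[OF ev] by (simp add: zero_ereal_def)
  then show ?thesis unfolding deriv_at_0plus_def by (rule tendsto_Lim[rotated]) simp
qed

lemma deriv_at_0plus_Suc:
  assumes eq: "\<And>y. y > 0 \<Longrightarrow> f y = bernstein_fun y"
  shows "deriv_at_0plus f (Suc n) = ereal ((-1)^n) * enn2ereal (moment (Suc n))"
proof -
  have ev: "eventually (\<lambda>y. ereal ((-1)^n) * ereal (laplace_moment (Suc n) y) = ereal ((deriv ^^ Suc n) f y)) (at_right 0)"
    using eventually_at_right_less[of 0]
  proof eventually_elim
    fix y :: real assume y: "y > 0"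
    have h: "(deriv ^^ Suc n) f y = (-1)^n * laplace_moment (Suc n) y"
      by (rule higher_deriv_bernstein_fun[OF eq y])
    show "ereal ((-1)^n) * ereal (laplace_moment (Suc n) y) = ereal ((deriv ^^ Suc n) f y)"
      unfolding h by simp
  qed
  have "((\<lambda>y. ereal ((-1)^n) * ereal (laplace_moment (Suc n) y)) \<longlongrightarrow> ereal ((-1)^n) * enn2ereal (moment (Suc n))) (at_right 0)"
    by (intro tendsto_cmult_ereal laplace_moment_tendsto_moment) auto
  then have "((\<lambda>y. ereal ((deriv ^^ Suc n) f y)) \<longlongrightarrow> ereal ((-1)^n) * enn2ereal (moment (Suc n))) (at_right 0)"
    using tendsto_cong[OF ev] by simp
  then show ?thesis unfolding deriv_at_0plus_def by (rule tendsto_Lim[rotated]) simp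
qed

lemma nn_integral_power_cmult:
  assumes "c \<ge> 0"
  shows "(\<integral>\<^sup>+ t. ennreal (t^(Suc n) * c) \<partial>\<nu>) = ennreal c * moment (Suc n)"
proof -
  have "(\<integral>\<^sup>+ t. ennreal (t^(Suc n) * c) \<partial>\<nu>) = (\<integral>\<^sup>+ t. ennreal c * ennreal (t^(Suc n)) \<partial>\<nu>)"
    using assms by (intro nn_integral_cong) (simp add: ennreal_mult' mult.commute)
  also have "\<dots> = ennreal c * moment (Suc n)"
    unfolding moment_def by (rule nn_integral_cmult) (intro measurable_borel, simp)
  finally show ?thesis .
qed

lemma nn_integral_mult_exp_finite:
  assumes moment_finite: "\<And>n. moment (Suc n) \<noteq> top" and r: "r \<ge> 0"
    and summable_moments: "summable (\<lambda>n. enn2real (moment (Suc n)) / fact n * r^n)"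
  shows "(\<integral>\<^sup>+ t. ennreal (t * exp (r*t)) \<partial>\<nu>) < \<infinity>"
proof -
  have "(\<integral>\<^sup>+ t. ennreal (t * exp (r*t)) \<partial>\<nu>) = (\<integral>\<^sup>+ t. (\<Sum>n. ennreal (t^(Suc n) * (r^n / fact n))) \<partial>\<nu>)"
    using AE_pos
  proof (intro nn_integral_cong_AE, eventually_elim)
    fix t :: real assume t: "t > 0"
    show "ennreal (t * exp (r*t)) = (\<Sum>n. ennreal (t^(Suc n) * (r^n / fact n)))"
      by (rule suminf_ennreal_eq[symmetric, OF _ sums_power_mult_exp]) (use t r in simp)
  qed
  also have "\<dots> = (\<Sum>n. \<integral>\<^sup>+ t. ennreal (t^(Suc n) * (r^n / fact n)) \<partial>\<nu>)"
    by (rule nn_integral_suminf) (intro measurable_borel, simp)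
  also have "\<dots> = (\<Sum>n. ennreal (enn2real (moment (Suc n)) / fact n * r^n))"
  proof (intro suminf_cong)
    fix n
    have "(\<integral>\<^sup>+ t. ennreal (t^(Suc n) * (r^n / fact n)) \<partial>\<nu>) = ennreal (r^n / fact n) * moment (Suc n)"
      using r by (intro nn_integral_power_cmult) simp
    also have "\<dots> = ennreal (r^n / fact n) * ennreal (enn2real (moment (Suc n)))"
      using moment_finite[of n] by (simp add: ennreal_enn2real_if)
    also have "\<dots> = ennreal (enn2real (moment (Suc n)) / fact n * r^n)"
      using r by (simp add: ennreal_mult[symmetric] mult_ac)
    finally show "(\<integral>\<^sup>+ t. ennreal (t^(Suc n) * (r^n / fact n)) \<partial>\<nu>) = ennreal (enn2real (moment (Suc n)) / fact n * r^n)" .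
  qed
  also have "\<dots> = ennreal (\<Sum>n. enn2real (moment (Suc n)) / fact n * r^n)"
    by (rule suminf_ennreal2[OF _ summable_moments]) (use r in simp)
  finally show ?thesis by simp
qed

lemma nn_integral_exp_minus_1_finite:
  assumes moment_finite: "\<And>n. moment (Suc n) \<noteq> top" and r: "r \<ge> 0"
    and summable_moments: "summable (\<lambda>n. enn2real (moment (Suc n)) / fact n * r^n)"
  shows "(\<integral>\<^sup>+ t. ennreal (exp (r*t) - 1) \<partial>\<nu>) < \<infinity>"
proof -
  have "(\<integral>\<^sup>+ t. ennreal (exp (r*t) - 1) \<partial>\<nu>) \<le> (\<integral>\<^sup>+ t. ennreal r * ennreal (t * exp (r*t)) \<partial>\<nu>)"
    using AE_pos
  proof (intro nn_integral_mono_AE, eventually_elim)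
    fix t :: real assume t: "t > 0"
    have "exp (r*t) - 1 \<le> (r*t) * exp (r*t)" using r t by (intro exp_minus_one_le) simp
    then show "ennreal (exp (r*t) - 1) \<le> ennreal r * ennreal (t * exp (r*t))"
      using r t by (simp add: ennreal_mult[symmetric] mult_ac ennreal_leI)
  qed
  also have "\<dots> = ennreal r * (\<integral>\<^sup>+ t. ennreal (t * exp (r*t)) \<partial>\<nu>)"
    by (rule nn_integral_cmult) (intro measurable_borel, simp)
  also have "\<dots> < \<infinity>"
    using nn_integral_mult_exp_finite[OF moment_finite r summable_moments]
      by (simp add: ennreal_mult_less_top)
  finally show ?thesis .
qed

lemma nn_integral_exp_mult_min_1_finite:
  assumes s: "s \<ge> 0" and exp_finite: "(\<integral>\<^sup>+ t. ennreal (exp (s*t) - 1) \<partial>\<nu>) < \<infinity>"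
  shows "(\<integral>\<^sup>+ t. ennreal (exp (s*t) * min 1 t) \<partial>\<nu>) < \<infinity>"
proof -
  have "(\<integral>\<^sup>+ t. ennreal (exp (s*t) * min 1 t) \<partial>\<nu>) \<le> (\<integral>\<^sup>+ t. ennreal (min 1 t) + ennreal (exp (s*t) - 1) \<partial>\<nu>)"
    using AE_pos
  proof (intro nn_integral_mono_AE, eventually_elim)
    fix t :: real assume t: "t > 0"
    have exp_ge_1: "exp (s*t) \<ge> 1" using s t by simp
    have "exp (s*t) * min 1 t \<le> min 1 t + (exp (s*t) - 1)"
    proof (cases "t \<le> 1")
      case True
      have "t * (exp (s*t) - 1) \<le> 1 * (exp (s*t) - 1)"
        using True exp_ge_1 by (intro mult_right_mono) auto
      then show ?thesis using True by (simp add: algebra_simps)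
    next
      case False then show ?thesis by simp
    qed
    then show "ennreal (exp (s*t) * min 1 t) \<le> ennreal (min 1 t) + ennreal (exp (s*t) - 1)"
      using t exp_ge_1 by (simp add: ennreal_plus[symmetric] ennreal_leI del: ennreal_plus)
  qed
  also have "\<dots> = (\<integral>\<^sup>+ t. ennreal (min 1 t) \<partial>\<nu>) + (\<integral>\<^sup>+ t. ennreal (exp (s*t) - 1) \<partial>\<nu>)"
    by (rule nn_integral_add) (intro measurable_borel, simp)+
  also have "\<dots> < \<infinity>" using nn_integral_min_1 exp_finite by simp
  finally show ?thesis .
qed

lemma nn_integral_exp_minus_one_eq_suminf:
  assumes moment_finite: "\<And>n. moment (Suc n) \<noteq> top" and s: "s \<ge> 0"
  shows "(\<integral>\<^sup>+ t. ennreal (exp (s*t) - 1) \<partial>\<nu>)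
    = (\<Sum>n. ennreal (enn2real (moment (Suc n)) * (s^(Suc n) / fact (Suc n))))"
proof -
  have "(\<integral>\<^sup>+ t. ennreal (exp (s*t) - 1) \<partial>\<nu>) = (\<integral>\<^sup>+ t. (\<Sum>n. ennreal (t^(Suc n) * (s^(Suc n) / fact (Suc n)))) \<partial>\<nu>)"
    using AE_pos
  proof (intro nn_integral_cong_AE, eventually_elim)
    fix t :: real assume t: "t > 0"
    show "ennreal (exp (s*t) - 1) = (\<Sum>n. ennreal (t^(Suc n) * (s^(Suc n) / fact (Suc n))))"
      by (rule suminf_ennreal_eq[symmetric, OF _ sums_exp_minus_one]) (use t s in simp)
  qed
  also have "\<dots> = (\<Sum>n. \<integral>\<^sup>+ t. ennreal (t^(Suc n) * (s^(Suc n) / fact (Suc n))) \<partial>\<nu>)"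
    by (rule nn_integral_suminf) (intro measurable_borel, simp)
  also have "\<dots> = (\<Sum>n. ennreal (enn2real (moment (Suc n)) * (s^(Suc n) / fact (Suc n))))"
  proof (intro suminf_cong)
    fix n
    have "(\<integral>\<^sup>+ t. ennreal (t^(Suc n) * (s^(Suc n) / fact (Suc n))) \<partial>\<nu>) = ennreal (s^(Suc n) / fact (Suc n)) * moment (Suc n)"
      using s by (intro nn_integral_power_cmult) simp
    also have "\<dots> = ennreal (s^(Suc n) / fact (Suc n)) * ennreal (enn2real (moment (Suc n)))"
      using moment_finite[of n] by (simp add: ennreal_enn2real_if)
    also have "\<dots> = ennreal (enn2real (moment (Suc n)) * (s^(Suc n) / fact (Suc n)))"
      using s by (simp add: ennreal_mult[symmetric] mult_ac)
    finally show "(\<integral>\<^sup>+ t. ennreal (t^(Suc n) * (s^(Suc n) / fact (Suc n))) \<partial>\<nu>) = ennreal (enn2real (moment (Suc n)) * (s^(Suc n) / fact (Suc n)))" .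
  qed
  finally show ?thesis .
qed

lemma bernstein_fun_taylor:
  assumes coeff_0: "deriv_at_0plus f 0 = 0"
    and coeff_Suc: "\<And>n. deriv_at_0plus f (Suc n) = ereal ((-1)^n) * enn2ereal (moment (Suc n))"
    and moment_finite: "\<And>n. moment (Suc n) \<noteq> top" and s: "s \<ge> 0"
    and exp_finite: "(\<integral>\<^sup>+ t. ennreal (exp (s*t) - 1) \<partial>\<nu>) < \<infinity>"
  shows "integrable \<nu> (\<lambda>t. 1 - exp (s*t))"
    "(\<Sum>n. real_of_ereal (deriv_at_0plus f n) / fact n * (-s)^n) = (\<integral>t. 1 - exp (s*t) \<partial>\<nu>)"
proof -
  define a where "a n = enn2real (moment (Suc n)) * (s^(Suc n) / fact (Suc n))" for n
  have a_nonneg: "a n \<ge> 0" for n unfolding a_def using s by simp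
  have series: "(\<integral>\<^sup>+ t. ennreal (exp (s*t) - 1) \<partial>\<nu>) = (\<Sum>n. ennreal (a n))"
    unfolding a_def by (rule nn_integral_exp_minus_one_eq_suminf[OF moment_finite s])
  have summable_a: "summable a"
    using series exp_finite a_nonneg by (intro summable_suminf_not_top) auto
  have nn_integral_eq: "(\<integral>\<^sup>+ t. ennreal (exp (s*t) - 1) \<partial>\<nu>) = ennreal (suminf a)"
    using series suminf_ennreal2[OF a_nonneg summable_a] by simp
  have measurable_exp: "(\<lambda>t. exp (s*t) - 1) \<in> borel_measurable \<nu>" by (intro measurable_borel) simp
  have nonneg: "AE t in \<nu>. 0 \<le> exp (s*t) - 1" using AE_pos by eventually_elim (use s in simp)
  have integrable_exp: "integrable \<nu> (\<lambda>t. exp (s*t) - 1)"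
    by (rule integrableI_nonneg[OF measurable_exp nonneg exp_finite])
  show "integrable \<nu> (\<lambda>t. 1 - exp (s*t))" using integrable_minus[OF integrable_exp] by simp
  have "(\<integral>t. 1 - exp (s*t) \<partial>\<nu>) = - (\<integral>t. exp (s*t) - 1 \<partial>\<nu>)"
    using integral_minus[of \<nu> "\<lambda>t. exp (s*t) - 1"] by simp
  also have "(\<integral>t. exp (s*t) - 1 \<partial>\<nu>) = enn2real (\<integral>\<^sup>+ t. ennreal (exp (s*t) - 1) \<partial>\<nu>)"
    by (rule integral_eq_nn_integral[OF measurable_exp nonneg])
  also have "\<dots> = suminf a" using nn_integral_eq summable_a a_nonneg by (simp add: suminf_nonneg)
  finally have integral_eq: "(\<integral>t. 1 - exp (s*t) \<partial>\<nu>) = - suminf a" .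
  define coeff_term where "coeff_term n = real_of_ereal (deriv_at_0plus f n) / fact n * (-s)^n" for n
  have coeff_term_Suc: "coeff_term (Suc n) = - a n" for n
  proof -
    have "real_of_ereal (deriv_at_0plus f (Suc n)) = (-1)^n * enn2real (moment (Suc n))"
      unfolding coeff_Suc using enn2ereal_eq_ereal_enn2real[OF moment_finite[of n]] by simp
    then have "coeff_term (Suc n) = enn2real (moment (Suc n)) / fact (Suc n) * ((-1)^n * (-s)^(Suc n))"
      unfolding coeff_term_def by (simp add: mult_ac)
    also have "\<dots> = - a n" unfolding neg_one_power_mult_neg_power a_def by simp
    finally show ?thesis .
  qed
  have coeff_term_0: "coeff_term 0 = 0" unfolding coeff_term_def coeff_0 by simp
  have "(\<lambda>n. coeff_term (Suc n)) sums (- suminf a)"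
    unfolding coeff_term_Suc by (intro sums_minus summable_sums summable_a)
  then have "coeff_term sums (- suminf a)" by (subst (asm) sums_Suc_iff) (simp add: coeff_term_0)
  then show "(\<Sum>n. real_of_ereal (deriv_at_0plus f n) / fact n * (-s)^n) = (\<integral>t. 1 - exp (s*t) \<partial>\<nu>)"
    unfolding integral_eq coeff_term_def[symmetric] by (rule sums_unique[symmetric])
qed

end

section \<open>The L\'evy--Khintchine representation of the extension \<open>\<phi>\<^sub>e\<close>\<close>

lemma omega0_nonpos: "omega0 f \<le> 0"
proof (cases "\<forall>n. \<bar>deriv_at_0plus f n\<bar> \<noteq> \<infinity>")
  case True
  have "ereal 0 \<in> {ereal l | l. summable (\<lambda>n. real_of_ereal (deriv_at_0plus f n) / fact n * l ^ n)}"
    using summable_zero_power'[of "\<lambda>n. real_of_ereal (deriv_at_0plus f n) / fact n"] by blast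
  then have "Inf {ereal l | l. summable (\<lambda>n. real_of_ereal (deriv_at_0plus f n) / fact n * l ^ n)} \<le> 0"
    unfolding zero_ereal_def by (rule Inf_lower)
  then show ?thesis using True by (simp add: omega0_def)
next
  case False
  then show ?thesis unfolding omega0_def by (subst if_not_P) simp_all
qed

lemma deriv_at_0plus_deriv: "deriv_at_0plus (deriv f) n = deriv_at_0plus f (Suc n)"
  unfolding deriv_at_0plus_def by (simp only: funpow_Suc_right o_def)

context levy_measure
begin

text \<open>For \<open>x \<le> 0\<close>, \<open>x > \<omega>\<^sub>0\<^sup>\<phi>\<^sup>'\<close> makes the Taylor series of \<open>\<phi>'\<close> at \<open>0+\<close> converge at \<open>-x\<close>; its
  coefficients are the moments of \<open>\<nu>\<close>, hence \<open>\<integral> t e\<^sup>-\<^sup>x\<^sup>t \<nu>(dt) < \<infinity>\<close>.\<close>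

lemma phi_ext_nonpos_representation:
  assumes eq: "\<And>y. y > 0 \<Longrightarrow> \<phi> y = bernstein_fun y"
    and x: "x \<le> 0" "omega0 (deriv \<phi>) < ereal x"
  shows "integrable \<nu> (\<lambda>t. 1 - exp (-(x*t)))" "phi_ext \<phi> x = (\<integral>t. 1 - exp (-(x*t)) \<partial>\<nu>)"
    "(\<integral>\<^sup>+ t. ennreal (exp (-(x*t)) * min 1 t) \<partial>\<nu>) < \<infinity>"
proof -
  define s where "s = -x"
  have s: "s \<ge> 0" "x = -s" using x by (simp_all add: s_def)
  have "omega0 (deriv \<phi>) \<noteq> 0" using x by (auto simp: zero_ereal_def)
  then have finite: "\<forall>n. \<bar>deriv_at_0plus (deriv \<phi>) n\<bar> \<noteq> \<infinity>"
    and omega0: "omega0 (deriv \<phi>) = Inf {ereal l | l. summable (\<lambda>n. real_of_ereal (deriv_at_0plus (deriv \<phi>) n) / fact n * l ^ n)}"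
    unfolding omega0_def by (auto split: if_splits)
  have coeff: "deriv_at_0plus \<phi> (Suc n) = ereal ((-1)^n) * enn2ereal (moment (Suc n))" for n
    by (rule deriv_at_0plus_Suc[OF eq])
  have moment_finite: "moment (Suc n) \<noteq> top" for n
  proof
    assume "moment (Suc n) = top"
    then have "\<bar>deriv_at_0plus (deriv \<phi>) n\<bar> = \<infinity>" unfolding deriv_at_0plus_deriv coeff by simp
    then show False using spec[OF finite, of n] by simp
  qed
  have "real_of_ereal (deriv_at_0plus (deriv \<phi>) n) = (-1)^n * enn2real (moment (Suc n))" for n
    unfolding deriv_at_0plus_deriv coeff using enn2ereal_eq_ereal_enn2real[OF moment_finite[of n]]
      by simp
  moreover obtain l where "summable (\<lambda>n. real_of_ereal (deriv_at_0plus (deriv \<phi>) n) / fact n * l ^ n)" "l < -s"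
    using x(2) s unfolding omega0 by (auto simp: Inf_less_iff)
  then have "summable (\<lambda>n. norm (real_of_ereal (deriv_at_0plus (deriv \<phi>) n) / fact n * s ^ n))"
    by (intro powser_insidea) (use s in auto)
  ultimately have "summable (\<lambda>n. enn2real (moment (Suc n)) / fact n * s^n)"
    using s by (simp add: abs_mult power_abs)
  then have exp_finite: "(\<integral>\<^sup>+ t. ennreal (exp (s*t) - 1) \<partial>\<nu>) < \<infinity>"
    by (rule nn_integral_exp_minus_1_finite[OF moment_finite s(1)])
  note taylor = bernstein_fun_taylor[OF deriv_at_0plus_0[OF eq] coeff moment_finite s(1) exp_finite]
  show "integrable \<nu> (\<lambda>t. 1 - exp (-(x*t)))" using taylor(1) s by simp
  show "phi_ext \<phi> x = (\<integral>t. 1 - exp (-(x*t)) \<partial>\<nu>)" using taylor(2) s by (simp add: phi_ext_def)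
  show "(\<integral>\<^sup>+ t. ennreal (exp (-(x*t)) * min 1 t) \<partial>\<nu>) < \<infinity>"
    using nn_integral_exp_mult_min_1_finite[OF s(1) exp_finite] s by simp
qed

lemma phi_ext_pos_representation:
  assumes eq: "\<And>y. y > 0 \<Longrightarrow> \<phi> y = bernstein_fun y" and x: "x > 0"
  shows "integrable \<nu> (\<lambda>t. 1 - exp (-(x*t)))" "phi_ext \<phi> x = (\<integral>t. 1 - exp (-(x*t)) \<partial>\<nu>)"
    "(\<integral>\<^sup>+ t. ennreal (exp (-(x*t)) * min 1 t) \<partial>\<nu>) < \<infinity>"
proof -
  show "integrable \<nu> (\<lambda>t. 1 - exp (-(x*t)))" by (rule integrable_one_minus_exp[OF x])
  show "phi_ext \<phi> x = (\<integral>t. 1 - exp (-(x*t)) \<partial>\<nu>)"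
    using eq[OF x] x by (simp add: phi_ext_def bernstein_fun_def)
  have "(\<integral>\<^sup>+ t. ennreal (exp (-(x*t)) * min 1 t) \<partial>\<nu>) \<le> (\<integral>\<^sup>+ t. ennreal (min 1 t) \<partial>\<nu>)"
    using AE_pos
  proof (intro nn_integral_mono_AE, eventually_elim)
    case (elim t)
    then have "exp (-(x*t)) * min 1 t \<le> 1 * min 1 t" using x by (intro mult_right_mono) auto
    then show ?case by (intro ennreal_leI) simp
  qed
  then show "(\<integral>\<^sup>+ t. ennreal (exp (-(x*t)) * min 1 t) \<partial>\<nu>) < \<infinity>"
    using nn_integral_min_1 by (rule le_less_trans)
qed

end

lemma phi_ext_levy_representation:
  assumes "levy_triple \<phi> 0 0 \<mu>" "\<beta> = - omega0 (deriv \<phi>)" "- \<beta> < ereal x"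
  shows "integrable \<mu> (\<lambda>t. 1 - exp (-(x*t)))" "phi_ext \<phi> x = (\<integral>t. 1 - exp (-(x*t)) \<partial>\<mu>)"
    "(\<integral>\<^sup>+ t. ennreal (exp (-(x*t)) * min 1 t) \<partial>\<mu>) < \<infinity>"
proof -
  interpret levy_measure \<mu> by (rule levy_triple_imp_levy_measure[OF assms(1)])
  have eq: "\<phi> y = bernstein_fun y" if "y > 0" for y
    using levy_triple_eq[OF assms(1) that] by (simp add: bernstein_fun_def)
  have "omega0 (deriv \<phi>) < ereal x"
    using assms(2,3) by (cases "omega0 (deriv \<phi>)") auto
  then show "integrable \<mu> (\<lambda>t. 1 - exp (-(x*t)))" "phi_ext \<phi> x = (\<integral>t. 1 - exp (-(x*t)) \<partial>\<mu>)"
    "(\<integral>\<^sup>+ t. ennreal (exp (-(x*t)) * min 1 t) \<partial>\<mu>) < \<infinity>"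
    using phi_ext_pos_representation[OF eq] phi_ext_nonpos_representation[OF eq]
      by (cases "x > 0"; simp)+
qed

section \<open>Densities of the L\'evy measure\<close>

lemma (in levy_measure) levy_measure_density_exp:
  assumes "(\<integral>\<^sup>+ t. ennreal (exp (-(a*t)) * min 1 t) \<partial>\<nu>) < \<infinity>"
  shows "levy_measure (density \<nu> (\<lambda>t. ennreal (exp (-(a*t)))))"
  unfolding levy_measure_def
proof (intro conjI)
  have m: "(\<lambda>t. ennreal (exp (-(a*t)))) \<in> borel_measurable \<nu>" by (intro measurable_borel) simp
  show "sets (density \<nu> (\<lambda>t. ennreal (exp (-(a*t))))) = sets borel" using sets_eq_borel by simp
  have "emeasure (density \<nu> (\<lambda>t. ennreal (exp (-(a*t))))) {..0} = (\<integral>\<^sup>+ t. ennreal (exp (-(a*t))) * indicator {..0} t \<partial>\<nu>)"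
    by (rule emeasure_density[OF m]) (simp add: sets_eq_borel)
  also have "\<dots> = (\<integral>\<^sup>+ t. 0 \<partial>\<nu>)"
    using AE_pos by (intro nn_integral_cong_AE) (auto elim!: eventually_mono simp: indicator_def)
  finally show "emeasure (density \<nu> (\<lambda>t. ennreal (exp (-(a*t))))) {..0} = 0" by simp
  have "(\<integral>\<^sup>+ t. ennreal (min 1 t) \<partial>density \<nu> (\<lambda>t. ennreal (exp (-(a*t)))))
      = (\<integral>\<^sup>+ t. ennreal (exp (-(a*t))) * ennreal (min 1 t) \<partial>\<nu>)"
    by (rule nn_integral_density[OF m]) (intro measurable_borel, simp)
  also have "\<dots> = (\<integral>\<^sup>+ t. ennreal (exp (-(a*t)) * min 1 t) \<partial>\<nu>)"
    by (intro nn_integral_cong) (simp add: ennreal_mult')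
  finally show "(\<integral>\<^sup>+ t. ennreal (min 1 t) \<partial>density \<nu> (\<lambda>t. ennreal (exp (-(a*t))))) < \<infinity>"
    using assms by simp
qed

lemma (in levy_measure) shift_difference_eq_integral_density:
  assumes integrable: "\<And>x. x \<ge> a \<Longrightarrow> integrable \<nu> (\<lambda>t. 1 - exp (-(x*t)))"
    and repr: "\<And>x. x \<ge> a \<Longrightarrow> f x = (\<integral>t. 1 - exp (-(x*t)) \<partial>\<nu>)"
    and "l > 0"
  shows "f (l + a) - f a = (\<integral>t. 1 - exp (-(l*t)) \<partial>density \<nu> (\<lambda>t. ennreal (exp (-(a*t)))))"
proof -
  have "f (l + a) - f a = (\<integral>t. 1 - exp (-((l+a)*t)) \<partial>\<nu>) - (\<integral>t. 1 - exp (-(a*t)) \<partial>\<nu>)"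
    using \<open>l > 0\<close> by (simp add: repr)
  also have "\<dots> = (\<integral>t. (1 - exp (-((l+a)*t))) - (1 - exp (-(a*t))) \<partial>\<nu>)"
    using \<open>l > 0\<close> by (intro Bochner_Integration.integral_diff[symmetric] integrable) auto
  also have "\<dots> = (\<integral>t. exp (-(a*t)) * (1 - exp (-(l*t))) \<partial>\<nu>)"
    by (intro Bochner_Integration.integral_cong) (simp_all add: exp_add[symmetric] algebra_simps)
  also have "\<dots> = (\<integral>t. 1 - exp (-(l*t)) \<partial>density \<nu> (\<lambda>t. ennreal (exp (-(a*t)))))"
    by (subst integral_density) (auto intro!: measurable_borel)
  finally show ?thesis .
qed

text \<open>The L\'evy measure of \<open>\<lambda> \<mapsto> f(\<lambda> + a) - f(a)\<close> is \<open>e\<^sup>-\<^sup>a\<^sup>t \<mu>(dt)\<close>, so the completely monotone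
  density \<open>m\<close> it has by complete Bernsteinness gives \<open>\<mu>(dt) = e\<^sup>a\<^sup>t m(t) dt\<close>.\<close>

lemma levy_density_of_complete_bernstein_shift:
  assumes "levy_measure \<mu>"
    and integrable: "\<And>x. x \<ge> a \<Longrightarrow> integrable \<mu> (\<lambda>t. 1 - exp (-(x*t)))"
    and repr: "\<And>x. x \<ge> a \<Longrightarrow> f x = (\<integral>t. 1 - exp (-(x*t)) \<partial>\<mu>)"
    and finite: "(\<integral>\<^sup>+ t. ennreal (exp (-(a*t)) * min 1 t) \<partial>\<mu>) < \<infinity>"
    and cbf: "complete_bernstein (\<lambda>l. f (l + a) - f a)"
  obtains m where "completely_monotone m" "m \<in> borel_measurable borel" "\<And>t. t > 0 \<Longrightarrow> m t \<ge> 0"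
    "\<mu> = density lborel (\<lambda>t. ennreal (indicator {0<..} t * (exp (a*t) * m t)))"
proof -
  interpret levy_measure \<mu> by fact
  from cbf obtain a' b' \<nu> m where triple: "levy_triple (\<lambda>l. f (l + a) - f a) a' b' \<nu>"
    and "has_density_on_pos \<nu> m" and cm: "completely_monotone m"
    unfolding complete_bernstein_def by blast
  then have m: "m \<in> borel_measurable borel" "\<And>t. t > 0 \<Longrightarrow> m t \<ge> 0"
    and \<nu>: "\<nu> = density lborel (\<lambda>t. ennreal (indicator {0<..} t * m t))"
    unfolding has_density_on_pos_def by auto
  define \<nu>' where "\<nu>' = density \<mu> (\<lambda>t. ennreal (exp (-(a*t))))"
  have "\<nu> = \<nu>'"
  proof (rule levy_measure_unique[OF levy_triple_imp_levy_measure[OF triple]])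
    show "levy_measure \<nu>'" unfolding \<nu>'_def by (rule levy_measure_density_exp[OF finite])
    fix l :: real
    assume "l > 0"
    then show "a' + b'*l + (\<integral>t. 1 - exp (-(l*t)) \<partial>\<nu>) = (\<integral>t. 1 - exp (-(l*t)) \<partial>\<nu>')"
      using levy_triple_eq[OF triple \<open>l > 0\<close>] shift_difference_eq_integral_density[OF integrable repr]
      by (simp add: \<nu>'_def)
  qed
  have "\<mu> = density \<nu>' (\<lambda>t. ennreal (exp (a*t)))"
    unfolding \<nu>'_def
  proof (rule density_density_cancel[symmetric])
    show "AE t in \<mu>. ennreal (exp (-(a*t))) * ennreal (exp (a*t)) = 1"
      using ennreal_exp_mult_exp_minus[of "a*_"] by (simp add: mult.commute)
  qed (auto intro: measurable_borel)
  also have "\<dots> = density lborel (\<lambda>t. ennreal (indicator {0<..} t * m t) * ennreal (exp (a*t)))"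
    unfolding \<open>\<nu> = \<nu>'\<close>[symmetric] \<nu> by (rule density_density_eq) (use m in auto)
  also have "\<dots> = density lborel (\<lambda>t. ennreal (indicator {0<..} t * (exp (a*t) * m t)))"
    by (intro arg_cong[where f="density lborel"] ext)
       (auto simp: indicator_def ennreal_mult[symmetric] m(2) mult.commute)
  finally show ?thesis using that cm m by blast
qed

lemma AE_lborel_eq_imp_eq_continuous:
  fixes f g :: "real \<Rightarrow> real"
  assumes "continuous_on {0<..} f" "continuous_on {0<..} g"
    and ae: "AE t in lborel. t > 0 \<longrightarrow> f t = g t" and "t0 > 0"
  shows "f t0 = g t0"
proof (rule ccontr)
  assume "f t0 \<noteq> g t0"
  have "continuous_on {0<..} (\<lambda>t. f t - g t)" using assms by (intro continuous_intros)
  then have "open ({0<..} \<inter> (\<lambda>t. f t - g t) -` (-{0}))"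
    by (intro continuous_open_preimage) auto
  moreover have "t0 \<in> {0<..} \<inter> (\<lambda>t. f t - g t) -` (-{0})" using \<open>f t0 \<noteq> g t0\<close> \<open>t0 > 0\<close> by auto
  ultimately obtain r where "r > 0" and r: "ball t0 r \<subseteq> {0<..} \<inter> (\<lambda>t. f t - g t) -` (-{0})"
    by (meson open_contains_ball)
  from ae obtain N where N: "{t. \<not> (t > 0 \<longrightarrow> f t = g t)} \<subseteq> N" "N \<in> sets lborel" "emeasure lborel N = 0"
    by (auto elim!: AE_E)
  have "{t0 - r <..< t0 + r} \<subseteq> N"
    using r N(1) by (force simp: dist_real_def abs_less_iff)
  then have "emeasure lborel {t0 - r <..< t0 + r} \<le> emeasure lborel N"
    by (intro emeasure_mono N(2))
  then show False using N(3) \<open>r > 0\<close> by simp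
qed

lemma density_pos_continuous_unique:
  fixes f g :: "real \<Rightarrow> real"
  assumes eq: "density lborel (\<lambda>t. ennreal (indicator {0<..} t * f t))
      = density lborel (\<lambda>t. ennreal (indicator {0<..} t * g t))"
    and "f \<in> borel_measurable borel" "g \<in> borel_measurable borel"
    and "\<And>t. t > 0 \<Longrightarrow> f t \<ge> 0" "\<And>t. t > 0 \<Longrightarrow> g t \<ge> 0"
    and "continuous_on {0<..} f" "continuous_on {0<..} g" and "t > 0"
  shows "f t = g t"
proof (rule AE_lborel_eq_imp_eq_continuous[where f=f and g=g])
  have "AE t in lborel. ennreal (indicator {0<..} t * f t) = ennreal (indicator {0<..} t * g t)"
    using eq assms(2,3)
      by (subst (asm) sigma_finite_measure.density_unique_iff[OF sigma_finite_lborel]) auto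
  then show "AE t in lborel. t > 0 \<longrightarrow> f t = g t"
    by eventually_elim (use assms(4,5) in auto)
qed fact+

lemma levy_density_exp_weighted:
  assumes "levy_triple \<phi> 0 0 \<mu>" "\<beta> = - omega0 (deriv \<phi>)"
    and cbf: "\<forall>a::real. - \<beta> < ereal a \<longrightarrow> complete_bernstein (\<lambda>l. phi_ext \<phi> (l + a) - phi_ext \<phi> a)"
    and a: "- \<beta> < ereal a"
  obtains m where "completely_monotone m" "m \<in> borel_measurable borel" "\<And>t. t > 0 \<Longrightarrow> m t \<ge> 0"
    "\<mu> = density lborel (\<lambda>t. ennreal (indicator {0<..} t * (exp (a*t) * m t)))"
proof (rule levy_density_of_complete_bernstein_shift)
  have above: "- \<beta> < ereal x" if "x \<ge> a" for x
    using a that by (cases \<beta>) auto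
  show "levy_measure \<mu>" by (rule levy_triple_imp_levy_measure[OF assms(1)])
  show "integrable \<mu> (\<lambda>t. 1 - exp (-(x*t)))" if "x \<ge> a" for x
    by (rule phi_ext_levy_representation(1)[OF assms(1,2) above[OF that]])
  show "phi_ext \<phi> x = (\<integral>t. 1 - exp (-(x*t)) \<partial>\<mu>)" if "x \<ge> a" for x
    by (rule phi_ext_levy_representation(2)[OF assms(1,2) above[OF that]])
  show "(\<integral>\<^sup>+ t. ennreal (exp (-(a*t)) * min 1 t) \<partial>\<mu>) < \<infinity>"
    by (rule phi_ext_levy_representation(3)[OF assms(1,2) a])
  show "complete_bernstein (\<lambda>l. phi_ext \<phi> (l + a) - phi_ext \<phi> a)" using cbf a by blast
qed (rule that)

lemma completely_monotone_exp_mult_density: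
  assumes "has_density_on_pos \<mu> g" "continuous_on {0<..} g"
    and cm: "completely_monotone m" and "m \<in> borel_measurable borel" "\<And>t. t > 0 \<Longrightarrow> m t \<ge> 0"
    and \<mu>: "\<mu> = density lborel (\<lambda>t. ennreal (indicator {0<..} t * (exp (a*t) * m t)))"
  shows "completely_monotone (\<lambda>t. exp (- a * t) * g t)"
proof (rule completely_monotone_cong[OF _ cm])
  fix t :: real
  assume "t > 0"
  have "exp (a*t) * m t = g t"
  proof (rule density_pos_continuous_unique[where f="\<lambda>t. exp (a*t) * m t" and g=g])
    show "density lborel (\<lambda>t. ennreal (indicator {0<..} t * (exp (a*t) * m t)))
        = density lborel (\<lambda>t. ennreal (indicator {0<..} t * g t))"
      using assms(1) \<mu> by (simp add: has_density_on_pos_def)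
    show "continuous_on {0<..} (\<lambda>t. exp (a*t) * m t)"
      using completely_monotone_imp_continuous_on[OF cm] by (intro continuous_intros)
    show "(\<lambda>t. exp (a*t) * m t) \<in> borel_measurable borel" using assms(4) by measurable
    show "exp (a*t) * m t \<ge> 0" if "t > 0" for t using assms(5)[OF that] by simp
  qed (use assms(1,2) \<open>t > 0\<close> in \<open>simp_all add: has_density_on_pos_def\<close>)
  then show "m t = exp (- a * t) * g t"
    by (simp flip: \<open>exp (a*t) * m t = g t\<close> add: mult.assoc[symmetric] exp_add[symmetric])
qed

lemma completely_monotone_exp_mult_limit:
  assumes "\<And>a. a > - b \<Longrightarrow> completely_monotone (\<lambda>t. exp (- a * t) * g t)"
  shows "completely_monotone (\<lambda>t. exp (b * t) * g t)"
proof (rule completely_monotone_of_exp_mult)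
  fix e :: real
  assume "e > 0"
  then have "completely_monotone (\<lambda>t. exp (- (e - b) * t) * g t)" by (intro assms) simp
  moreover have "exp (- (e - b) * t) = exp (- e * t) * exp (b * t)" for t
    by (simp add: exp_add[symmetric] algebra_simps)
  ultimately show "completely_monotone (\<lambda>t. exp (- e * t) * (exp (b * t) * g t))"
    by (simp add: mult.assoc)
qed

theorem lemma4p2:
  fixes \<phi> :: "real \<Rightarrow> real" and \<mu> :: "real measure" and \<beta> :: ereal
  assumes "bernstein \<phi>"
    and "levy_triple \<phi> 0 0 \<mu>"
    and "\<beta> = - omega0 (deriv \<phi>)"
    and "\<forall>a::real. - \<beta> < ereal a \<longrightarrow>
           complete_bernstein (\<lambda>l. phi_ext \<phi> (l + a) - phi_ext \<phi> a)"
  shows "\<exists>g. has_density_on_pos \<mu> g \<and>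
           (\<beta> \<noteq> \<infinity> \<longrightarrow> completely_monotone (\<lambda>t. exp (real_of_ereal \<beta> * t) * g t)) \<and>
           (\<beta> = \<infinity> \<longrightarrow> (\<forall>c::real. completely_monotone (\<lambda>t. exp (c * t) * g t)))"
proof -
  have "\<beta> \<ge> 0" using omega0_nonpos[of "deriv \<phi>"] assms(3) by (simp add: ereal_uminus_le_reorder)
  have "- \<beta> < ereal 1" using \<open>\<beta> \<ge> 0\<close> by (cases \<beta>) auto
  obtain m where m: "completely_monotone m" "m \<in> borel_measurable borel" "\<And>t. t > 0 \<Longrightarrow> m t \<ge> 0"
    "\<mu> = density lborel (\<lambda>t. ennreal (indicator {0<..} t * (exp (1*t) * m t)))"
    using levy_density_exp_weighted[OF assms(2-4) \<open>- \<beta> < ereal 1\<close>] by blast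
  define g where "g t = exp t * m t" for t
  have "g \<in> borel_measurable borel" unfolding g_def using m(2) by measurable
  then have density: "has_density_on_pos \<mu> g"
    using m(3,4) by (simp add: has_density_on_pos_def g_def)
  have continuous: "continuous_on {0<..} g"
    unfolding g_def using completely_monotone_imp_continuous_on[OF m(1)] by (intro continuous_intros)
  have cm: "completely_monotone (\<lambda>t. exp (- a * t) * g t)" if "- \<beta> < ereal a" for a
    by (rule levy_density_exp_weighted[OF assms(2-4) that
          completely_monotone_exp_mult_density[OF density continuous]])
  have "completely_monotone (\<lambda>t. exp (b * t) * g t)" if "\<beta> = ereal b" for b
  proof (rule completely_monotone_exp_mult_limit)
    show "completely_monotone (\<lambda>t. exp (- a * t) * g t)" if "a > - b" for a
      using \<open>\<beta> = ereal b\<close> that by (intro cm) simp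
  qed
  then show ?thesis using density cm[of "- _"] \<open>\<beta> \<ge> 0\<close> by (cases \<beta>) auto
qed

end
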